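(* Let $G=H\times K$ with $H$ and $K$ nontrivial finite groups. Then $$\mathcal{D}(G)\ge (\mathcal{D}(H)+2)(\mathcal{D}(K)+2)-2,$$ with equality if and only if $H$ and $K$ are both nilpotent and $\gcd(|H|,|K|)=1$.
   Context: $\mathcal{D}(X)$ denotes the number of conjugacy classes of nontrivial subgroups $Y$ of the finite group $X$ with $N_X(Y)\neq Y$. *)

theory Defs
  imports "HOL-Algebra.Algebra"
begin

definition subgroup_conj_class :: "('a, 'b) monoid_scheme \<Rightarrow> 'a set \<Rightarrow> 'a set set" where
  "subgroup_conj_class G Y = {r_coset G (l_coset G g Y) (m_inv G g) | g. g \<in> carrier G}"

definition D_count :: "('a, 'b) monoid_scheme \<Rightarrow> nat" where
  "D_count G = card {subgroup_conj_class G Y | Y.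
      subgroup Y G \<and> Y \<noteq> {\<one>\<^bsub>G\<^esub>} \<and> normalizer G Y \<noteq> Y}"

definition lower_central_step :: "('a, 'b) monoid_scheme \<Rightarrow> 'a set \<Rightarrow> 'a set" where
  "lower_central_step G H = generate G
     {h \<otimes>\<^bsub>G\<^esub> g \<otimes>\<^bsub>G\<^esub> inv\<^bsub>G\<^esub> h \<otimes>\<^bsub>G\<^esub> inv\<^bsub>G\<^esub> g | h g. h \<in> H \<and> g \<in> carrier G}"

definition nilpotent_group :: "('a, 'b) monoid_scheme \<Rightarrow> bool" where
  "nilpotent_group G \<longleftrightarrow> group G \<and>
     (\<exists>n. (lower_central_step G ^^ n) (carrier G) = {\<one>\<^bsub>G\<^esub>})"

end

theory Submission
  imports Defs
begin

text \<open>
  A subgroup \<open>A \<times> B\<close> of \<open>H \<times> K\<close> has normalizer \<open>N(A) \<times> N(B)\<close>, and its conjugacy class is the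
  product of the classes of \<open>A\<close> and \<open>B\<close>. Call a class of subgroups of \<open>G\<close> admissible if it is
  trivial, the whole group, or not self-normalizing; there are \<open>D(G) + 2\<close> of them. Products of
  admissible classes of \<open>H\<close> and \<open>K\<close> are pairwise distinct classes of \<open>H \<times> K\<close>, and all of them except
  \<open>1 \<times> 1\<close> and \<open>H \<times> K\<close> are counted by \<open>D(H \<times> K)\<close>; this gives the bound.

  Equality holds iff every class counted by \<open>D(H \<times> K)\<close> is such a product. A proper self-normalizing
  subgroup \<open>A\<close> of \<open>H\<close> yields the extra class of \<open>A \<times> 1\<close>, and a prime dividing both orders yields
  the cyclic subgroup generated by \<open>(h, k)\<close> with \<open>h\<close>, \<open>k\<close> of that prime order, which is normalized by
  \<open>(h, 1)\<close> but is not a product. Conversely, for coprime orders every subgroup is a product, and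
  in a nilpotent group no proper subgroup is self-normalizing. It remains to see that a finite
  group satisfying this normalizer condition is nilpotent: its Sylow subgroups are normal, and
  counting fixed points modulo \<open>p\<close> of the conjugation action on cosets shows that the upper
  central series grows until it exhausts the group.
\<close>

section \<open>Conjugation of subsets\<close>

context group
begin

lemma mult_inv_cancel_r [simp]: "x \<in> carrier G \<Longrightarrow> g \<in> carrier G \<Longrightarrow> x \<otimes> g \<otimes> inv g = x"
  by (simp add: m_assoc)

lemma mult_inv_cancel_r2 [simp]: "x \<in> carrier G \<Longrightarrow> g \<in> carrier G \<Longrightarrow> x \<otimes> inv g \<otimes> g = x"
  by (simp add: m_assoc)

lemma mult_inv_cancel_l [simp]: "x \<in> carrier G \<Longrightarrow> a \<in> carrier G \<Longrightarrow> x \<otimes> (inv x \<otimes> a) = a"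
  by (simp add: m_assoc[symmetric])

lemma mult_inv_cancel_l2 [simp]: "x \<in> carrier G \<Longrightarrow> a \<in> carrier G \<Longrightarrow> inv x \<otimes> (x \<otimes> a) = a"
  by (simp add: m_assoc[symmetric])

lemma conj_set_eq_image:
  assumes "A \<subseteq> carrier G" "g \<in> carrier G"
  shows "(g <# A) #> inv g = (\<lambda>a. g \<otimes> a \<otimes> inv g) ` A"
  unfolding l_coset_def r_coset_def by auto

lemma mem_normalizer_iff_conj_set:
  assumes "A \<subseteq> carrier G"
  shows "g \<in> normalizer G A \<longleftrightarrow> g \<in> carrier G \<and> (g <# A) #> inv g = A"
  using assms unfolding normalizer_def stabilizer_def by auto

lemma mem_normalizer_iff:
  assumes "A \<subseteq> carrier G"
  shows "g \<in> normalizer G A \<longleftrightarrow> g \<in> carrier G \<and> (\<lambda>a. g \<otimes> a \<otimes> inv g) ` A = A"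
  using assms mem_normalizer_iff_conj_set conj_set_eq_image by auto

lemma normalizer_subset_carrier: "normalizer G A \<subseteq> carrier G"
  unfolding normalizer_def stabilizer_def by blast

lemma conj_set_subset: "A \<subseteq> carrier G \<Longrightarrow> g \<in> carrier G \<Longrightarrow> (g <# A) #> inv g \<subseteq> carrier G"
  using conj_set_eq_image by auto

lemma conj_set_comp:
  assumes "A \<subseteq> carrier G" "g \<in> carrier G" "h \<in> carrier G"
  shows "(g <# ((h <# A) #> inv h)) #> inv g = ((g \<otimes> h) <# A) #> inv (g \<otimes> h)"
proof -
  have "(\<lambda>a. g \<otimes> a \<otimes> inv g) ` (\<lambda>a. h \<otimes> a \<otimes> inv h) ` A = (\<lambda>a. (g \<otimes> h) \<otimes> a \<otimes> inv (g \<otimes> h)) ` A"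
    unfolding image_image using assms by (intro image_cong) (auto simp: m_assoc inv_mult_group)
  moreover have "(\<lambda>a. h \<otimes> a \<otimes> inv h) ` A \<subseteq> carrier G" using assms by auto
  ultimately show ?thesis using assms by (simp add: conj_set_eq_image)
qed

lemma conj_set_one: "A \<subseteq> carrier G \<Longrightarrow> (\<one> <# A) #> \<one> = A"
  by (simp add: lcos_mult_one l_coset_subset_G)

lemma conj_set_inv_cancel:
  assumes "A \<subseteq> carrier G" "g \<in> carrier G"
  shows "(inv g <# ((g <# A) #> inv g)) #> inv (inv g) = A"
  using conj_set_comp[of A "inv g" g] assms by (simp add: conj_set_one)

lemma card_conj_set:
  assumes "A \<subseteq> carrier G" "g \<in> carrier G"
  shows "card ((g <# A) #> inv g) = card A"
proof -
  have "inj_on (\<lambda>a. g \<otimes> a \<otimes> inv g) A"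
    using assms by (auto intro!: inj_onI simp: subset_iff)
  then show ?thesis using assms by (simp add: conj_set_eq_image card_image)
qed

lemma conj_set_subgroup_mem:
  assumes "subgroup A G" "a \<in> A"
  shows "(a <# A) #> inv a = A"
proof -
  have sub: "A \<subseteq> carrier G" "a \<in> carrier G" using assms subgroup.subset by blast+
  have "(\<lambda>x. a \<otimes> x \<otimes> inv a) ` A = A"
  proof
    show "(\<lambda>x. a \<otimes> x \<otimes> inv a) ` A \<subseteq> A" using assms
      by (auto intro!: subgroup.m_closed subgroup.m_inv_closed)
    show "A \<subseteq> (\<lambda>x. a \<otimes> x \<otimes> inv a) ` A"
    proof
      fix y assume y: "y \<in> A"
      have "inv a \<otimes> y \<otimes> a \<in> A" using assms y by (auto intro!: subgroup.m_closed subgroup.m_inv_closed)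
      moreover have "y = a \<otimes> (inv a \<otimes> y \<otimes> a) \<otimes> inv a"
        using sub y by (simp add: m_assoc subsetD)
      ultimately show "y \<in> (\<lambda>x. a \<otimes> x \<otimes> inv a) ` A" by blast
    qed
  qed
  then show ?thesis using sub by (simp add: conj_set_eq_image)
qed

lemma subgroup_subset_normalizer:
  assumes "subgroup A G"
  shows "A \<subseteq> normalizer G A"
proof
  fix a assume "a \<in> A"
  then show "a \<in> normalizer G A"
    using mem_normalizer_iff_conj_set[OF subgroup.subset[OF assms]] conj_set_subgroup_mem[OF assms]
      subgroup.mem_carrier[OF assms] by simp
qed

lemma normalizer_carrier: "normalizer G (carrier G) = carrier G"
  using subgroup_subset_normalizer[OF subgroup_self] normalizer_subset_carrier by blast

lemma normalizer_triv: "normalizer G {\<one>} = carrier G"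
  using mem_normalizer_iff[of "{\<one>}"] normalizer_subset_carrier by auto

lemma normalizer_conj_set:
  assumes "A \<subseteq> carrier G" "g \<in> carrier G"
  shows "normalizer G ((g <# A) #> inv g) = (g <# normalizer G A) #> inv g"
proof -
  have cs: "(g <# A) #> inv g \<subseteq> carrier G" using assms conj_set_subset by auto
  have "x \<in> normalizer G ((g <# A) #> inv g) \<longleftrightarrow> x \<in> (\<lambda>y. g \<otimes> y \<otimes> inv g) ` normalizer G A" for x
  proof
    assume x: "x \<in> normalizer G ((g <# A) #> inv g)"
    then have xc: "x \<in> carrier G" and xe: "(x <# ((g <# A) #> inv g)) #> inv x = (g <# A) #> inv g"
      using mem_normalizer_iff_conj_set[OF cs] by auto
    define y where "y = inv g \<otimes> x \<otimes> g"
    have yc: "y \<in> carrier G" using xc assms by (simp add: y_def)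
    have "(inv g <# ((x <# ((g <# A) #> inv g)) #> inv x)) #> inv (inv g)
        = (inv g <# (((x \<otimes> g) <# A) #> inv (x \<otimes> g))) #> inv (inv g)"
      using assms xc by (simp add: conj_set_comp)
    also have "\<dots> = ((inv g \<otimes> (x \<otimes> g)) <# A) #> inv (inv g \<otimes> (x \<otimes> g))"
      using assms xc by (intro conj_set_comp) auto
    finally have "(y <# A) #> inv y = (inv g <# ((x <# ((g <# A) #> inv g)) #> inv x)) #> inv (inv g)"
      using assms xc by (simp add: y_def m_assoc)
    also have "\<dots> = A" using xe conj_set_inv_cancel[OF assms] by simp
    finally have "y \<in> normalizer G A" using mem_normalizer_iff_conj_set[OF assms(1)] yc by auto
    moreover have "x = g \<otimes> y \<otimes> inv g" using xc assms by (simp add: y_def m_assoc[symmetric])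
    ultimately show "x \<in> (\<lambda>y. g \<otimes> y \<otimes> inv g) ` normalizer G A" by blast
  next
    assume "x \<in> (\<lambda>y. g \<otimes> y \<otimes> inv g) ` normalizer G A"
    then obtain y where y: "y \<in> normalizer G A" and xy: "x = g \<otimes> y \<otimes> inv g" by blast
    have yc: "y \<in> carrier G" and ye: "(y <# A) #> inv y = A"
      using y mem_normalizer_iff_conj_set[OF assms(1)] by auto
    have xc: "x \<in> carrier G" using xy yc assms by auto
    have "(x <# ((g <# A) #> inv g)) #> inv x = ((x \<otimes> g) <# A) #> inv (x \<otimes> g)"
      using assms xc by (simp add: conj_set_comp)
    also have "x \<otimes> g = g \<otimes> y" using xy yc assms by (simp add: m_assoc)
    also have "((g \<otimes> y) <# A) #> inv (g \<otimes> y) = (g <# ((y <# A) #> inv y)) #> inv g"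
      using assms yc by (simp add: conj_set_comp)
    finally show "x \<in> normalizer G ((g <# A) #> inv g)"
      using ye mem_normalizer_iff_conj_set[OF cs] xc by auto
  qed
  then show ?thesis using normalizer_subset_carrier assms by (auto simp: conj_set_eq_image)
qed

lemma self_normalizing_conj_set_iff:
  assumes "A \<subseteq> carrier G" "g \<in> carrier G"
  shows "normalizer G ((g <# A) #> inv g) = (g <# A) #> inv g \<longleftrightarrow> normalizer G A = A"
  using normalizer_conj_set[OF assms]
    subgroup_conjugation_is_inj[OF assms(2) normalizer_subset_carrier assms(1)] by auto

end

context group
begin

abbreviation conj_class :: "'a set \<Rightarrow> 'a set set"
  where "conj_class A \<equiv> subgroup_conj_class G A"

lemma self_in_conj_class:
  assumes "A \<subseteq> carrier G"
  shows "A \<in> conj_class A"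
proof -
  have "(\<one> <# A) #> inv \<one> = A" using conj_set_one[OF assms] by simp
  then show ?thesis unfolding subgroup_conj_class_def using one_closed by blast
qed

lemma conj_class_triv: "conj_class {\<one>} = {{\<one>}}"
proof -
  have "\<And>g. g \<in> carrier G \<Longrightarrow> (g <# {\<one>}) #> inv g = {\<one>}" by (simp add: conj_set_eq_image)
  then show ?thesis unfolding subgroup_conj_class_def using one_closed by blast
qed

lemma conj_class_carrier: "conj_class (carrier G) = {carrier G}"
  unfolding subgroup_conj_class_def using conj_set_subgroup_mem[OF subgroup_self] by auto

lemma conj_class_memD:
  assumes "subgroup A G" "B \<in> conj_class A"
  shows "subgroup B G" "B = {\<one>} \<longleftrightarrow> A = {\<one>}" "normalizer G B = B \<longleftrightarrow> normalizer G A = A"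
    "B = carrier G \<longleftrightarrow> A = carrier G" "conj_class B = conj_class A"
proof -
  have As: "A \<subseteq> carrier G" using assms subgroup.subset by blast
  obtain g where g: "g \<in> carrier G" and B: "B = (g <# A) #> inv g"
    using assms unfolding subgroup_conj_class_def by auto
  show "subgroup B G" using B g assms subgroup_conjugation_is_surj2 by auto
  have "(g <# {\<one>}) #> inv g = {\<one>}" using g by (simp add: conj_set_eq_image)
  then show "B = {\<one>} \<longleftrightarrow> A = {\<one>}"
    using B subgroup_conjugation_is_inj[OF g As, of "{\<one>}"] by (metis empty_subsetI insert_subset one_closed)
  show "normalizer G B = B \<longleftrightarrow> normalizer G A = A"
    using B self_normalizing_conj_set_iff[OF As g] by simp
  have "(g <# carrier G) #> inv g = carrier G" using conj_set_subgroup_mem[OF subgroup_self g] .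
  then show "B = carrier G \<longleftrightarrow> A = carrier G"
    using B subgroup_conjugation_is_inj[OF g As order_refl] by metis
  have "C \<in> conj_class A" if CB: "C \<in> conj_class B" for C
  proof -
    obtain h where h: "h \<in> carrier G" and C: "C = (h <# B) #> inv h"
      using CB unfolding subgroup_conj_class_def by blast
    have "C = ((h \<otimes> g) <# A) #> inv (h \<otimes> g)" using C B conj_set_comp[OF As h g] by simp
    then show ?thesis unfolding subgroup_conj_class_def using g h by blast
  qed
  moreover have "C \<in> conj_class B" if CA: "C \<in> conj_class A" for C
  proof -
    obtain h where h: "h \<in> carrier G" and C: "C = (h <# A) #> inv h"
      using CA unfolding subgroup_conj_class_def by blast
    have hg: "h \<otimes> inv g \<in> carrier G" using g h by simp
    have "C = ((h \<otimes> inv g) <# B) #> inv (h \<otimes> inv g)"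
      using C B conj_set_comp[OF As hg g] g h by simp
    then show ?thesis unfolding subgroup_conj_class_def using hg by blast
  qed
  ultimately show "conj_class B = conj_class A" by blast
qed

lemma conj_class_nonempty:
  assumes "subgroup A G"
  shows "conj_class A \<noteq> {}" "B \<in> conj_class A \<Longrightarrow> B \<noteq> {}"
proof -
  show "conj_class A \<noteq> {}" using self_in_conj_class[OF subgroup.subset[OF assms]] by blast
  show "B \<noteq> {}" if "B \<in> conj_class A"
    using subgroup.one_closed[OF conj_class_memD(1)[OF assms that]] by blast
qed

lemma conj_class_subset_Pow: "A \<subseteq> carrier G \<Longrightarrow> conj_class A \<subseteq> Pow (carrier G)"
  unfolding subgroup_conj_class_def using conj_set_subset by auto

end

section \<open>Subgroups of a direct product\<close>

definition conj_class_prod :: "'a set set \<Rightarrow> 'c set set \<Rightarrow> ('a \<times> 'c) set set" where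
  "conj_class_prod c d = {A \<times> B | A B. A \<in> c \<and> B \<in> d}"

lemma image_fst_conj_class_prod:
  assumes "d \<noteq> {}" "\<And>B. B \<in> d \<Longrightarrow> B \<noteq> {}"
  shows "(\<lambda>S. fst ` S) ` conj_class_prod c d = c"
  using assms unfolding conj_class_prod_def by (auto simp: image_iff) (metis fst_image_times)

lemma image_snd_conj_class_prod:
  assumes "c \<noteq> {}" "\<And>A. A \<in> c \<Longrightarrow> A \<noteq> {}"
  shows "(\<lambda>S. snd ` S) ` conj_class_prod c d = d"
  using assms unfolding conj_class_prod_def by (auto simp: image_iff) (metis snd_image_times)

lemma DirProd_conj_set:
  assumes "group H" "group K" "A \<subseteq> carrier H" "B \<subseteq> carrier K" "h \<in> carrier H" "k \<in> carrier K"
  shows "((h, k) <#\<^bsub>H \<times>\<times> K\<^esub> (A \<times> B)) #>\<^bsub>H \<times>\<times> K\<^esub> inv\<^bsub>H \<times>\<times> K\<^esub> (h, k)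
         = ((h <#\<^bsub>H\<^esub> A) #>\<^bsub>H\<^esub> inv\<^bsub>H\<^esub> h) \<times> ((k <#\<^bsub>K\<^esub> B) #>\<^bsub>K\<^esub> inv\<^bsub>K\<^esub> k)"
proof -
  interpret H: group H by fact
  interpret K: group K by fact
  interpret HK: group "H \<times>\<times> K" using DirProd_group assms by blast
  have "((h, k) <#\<^bsub>H \<times>\<times> K\<^esub> (A \<times> B)) #>\<^bsub>H \<times>\<times> K\<^esub> inv\<^bsub>H \<times>\<times> K\<^esub> (h, k)
    = (\<lambda>a. (h, k) \<otimes>\<^bsub>H \<times>\<times> K\<^esub> a \<otimes>\<^bsub>H \<times>\<times> K\<^esub> inv\<^bsub>H \<times>\<times> K\<^esub> (h, k)) ` (A \<times> B)"
    using assms by (intro HK.conj_set_eq_image) auto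
  also have "\<dots> = (\<lambda>a. h \<otimes>\<^bsub>H\<^esub> a \<otimes>\<^bsub>H\<^esub> inv\<^bsub>H\<^esub> h) ` A \<times> (\<lambda>b. k \<otimes>\<^bsub>K\<^esub> b \<otimes>\<^bsub>K\<^esub> inv\<^bsub>K\<^esub> k) ` B"
    using assms by (auto simp: image_def)
  finally show ?thesis using assms by (simp add: H.conj_set_eq_image K.conj_set_eq_image)
qed

lemma normalizer_DirProd:
  assumes "group H" "group K" "A \<subseteq> carrier H" "B \<subseteq> carrier K" "A \<noteq> {}" "B \<noteq> {}"
  shows "normalizer (H \<times>\<times> K) (A \<times> B) = normalizer H A \<times> normalizer K B"
proof -
  interpret H: group H by fact
  interpret K: group K by fact
  interpret HK: group "H \<times>\<times> K" using DirProd_group assms by blast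
  have AB: "A \<times> B \<subseteq> carrier (H \<times>\<times> K)" using assms by auto
  note iffs = HK.mem_normalizer_iff_conj_set[OF AB] H.mem_normalizer_iff_conj_set[OF assms(3)]
    K.mem_normalizer_iff_conj_set[OF assms(4)]
  have "(h, k) \<in> normalizer (H \<times>\<times> K) (A \<times> B) \<longleftrightarrow> (h, k) \<in> normalizer H A \<times> normalizer K B" for h k
  proof (cases "h \<in> carrier H \<and> k \<in> carrier K")
    case True
    have "(h <#\<^bsub>H\<^esub> A) #>\<^bsub>H\<^esub> inv\<^bsub>H\<^esub> h \<noteq> {}" "(k <#\<^bsub>K\<^esub> B) #>\<^bsub>K\<^esub> inv\<^bsub>K\<^esub> k \<noteq> {}"
      using True assms by (simp_all add: H.conj_set_eq_image K.conj_set_eq_image)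
    then show ?thesis
      using True DirProd_conj_set[OF assms(1-4), of h k] assms(5,6) by (simp add: times_eq_iff iffs)
  next
    case False
    then show ?thesis by (simp add: iffs; blast)
  qed
  then show ?thesis by (simp add: set_eq_iff)
qed

lemma conj_class_DirProd:
  assumes "group H" "group K" "A \<subseteq> carrier H" "B \<subseteq> carrier K"
  shows "subgroup_conj_class (H \<times>\<times> K) (A \<times> B) =
         conj_class_prod (subgroup_conj_class H A) (subgroup_conj_class K B)"
proof
  show "subgroup_conj_class (H \<times>\<times> K) (A \<times> B) \<subseteq> conj_class_prod (subgroup_conj_class H A) (subgroup_conj_class K B)"
  proof
    fix C assume "C \<in> subgroup_conj_class (H \<times>\<times> K) (A \<times> B)"
    then obtain h k where hk: "h \<in> carrier H" "k \<in> carrier K"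
      and C: "C = ((h, k) <#\<^bsub>H \<times>\<times> K\<^esub> (A \<times> B)) #>\<^bsub>H \<times>\<times> K\<^esub> inv\<^bsub>H \<times>\<times> K\<^esub> (h, k)"
      unfolding subgroup_conj_class_def by auto
    then show "C \<in> conj_class_prod (subgroup_conj_class H A) (subgroup_conj_class K B)"
      unfolding conj_class_prod_def subgroup_conj_class_def DirProd_conj_set[OF assms hk] by blast
  qed
  show "conj_class_prod (subgroup_conj_class H A) (subgroup_conj_class K B) \<subseteq> subgroup_conj_class (H \<times>\<times> K) (A \<times> B)"
  proof
    fix C assume "C \<in> conj_class_prod (subgroup_conj_class H A) (subgroup_conj_class K B)"
    then obtain h k where hk: "h \<in> carrier H" "k \<in> carrier K"
      and C: "C = ((h <#\<^bsub>H\<^esub> A) #>\<^bsub>H\<^esub> inv\<^bsub>H\<^esub> h) \<times> ((k <#\<^bsub>K\<^esub> B) #>\<^bsub>K\<^esub> inv\<^bsub>K\<^esub> k)"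
      unfolding conj_class_prod_def subgroup_conj_class_def by blast
    moreover have "(h, k) \<in> carrier (H \<times>\<times> K)" using hk by simp
    ultimately show "C \<in> subgroup_conj_class (H \<times>\<times> K) (A \<times> B)"
      unfolding subgroup_conj_class_def DirProd_conj_set[OF assms hk, symmetric] by blast
  qed
qed

section \<open>Admissible classes\<close>

definition D_classes :: "('a, 'b) monoid_scheme \<Rightarrow> 'a set set set" where
  "D_classes G = {subgroup_conj_class G Y | Y. subgroup Y G \<and> Y \<noteq> {\<one>\<^bsub>G\<^esub>} \<and> normalizer G Y \<noteq> Y}"

definition admissible_classes :: "('a, 'b) monoid_scheme \<Rightarrow> 'a set set set" where
  "admissible_classes G = insert {{\<one>\<^bsub>G\<^esub>}} (insert {carrier G} (D_classes G))"

lemma D_count_eq_card_D_classes: "D_count G = card (D_classes G)"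
  unfolding D_count_def D_classes_def by simp

context group
begin

lemma finite_D_classes:
  assumes "finite (carrier G)"
  shows "finite (D_classes G)"
proof -
  have "D_classes G \<subseteq> Pow (Pow (carrier G))"
    unfolding D_classes_def using conj_class_subset_Pow subgroup.subset by blast
  then show ?thesis using assms by (meson finite_Pow_iff finite_subset)
qed

lemma conj_class_eq_triv_iff: "subgroup A G \<Longrightarrow> conj_class A = {{\<one>}} \<longleftrightarrow> A = {\<one>}"
  using self_in_conj_class[OF subgroup.subset] conj_class_triv by blast

lemma conj_class_eq_carrier_iff: "subgroup A G \<Longrightarrow> conj_class A = {carrier G} \<longleftrightarrow> A = carrier G"
  using self_in_conj_class[OF subgroup.subset] conj_class_carrier by blast

lemma mem_admissible_classes_iff:
  "c \<in> admissible_classes G \<longleftrightarrow>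
     (\<exists>A. subgroup A G \<and> c = conj_class A \<and> (A = {\<one>} \<or> A = carrier G \<or> normalizer G A \<noteq> A))"
  unfolding admissible_classes_def D_classes_def
  using conj_class_triv conj_class_carrier triv_subgroup subgroup_self by blast

lemma admissible_classes_memD:
  assumes "c \<in> admissible_classes G" "A \<in> c"
  shows "subgroup A G" "A = {\<one>} \<or> A = carrier G \<or> normalizer G A \<noteq> A"
proof -
  obtain A0 where A0: "subgroup A0 G" "c = conj_class A0"
    and adm: "A0 = {\<one>} \<or> A0 = carrier G \<or> normalizer G A0 \<noteq> A0"
    using assms(1) mem_admissible_classes_iff by blast
  show "subgroup A G" using conj_class_memD(1)[OF A0(1)] A0(2) assms(2) by blast
  show "A = {\<one>} \<or> A = carrier G \<or> normalizer G A \<noteq> A"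
    using conj_class_memD(2-4)[OF A0(1)] A0(2) assms(2) adm by blast
qed

lemma card_admissible_classes:
  assumes "finite (carrier G)" "carrier G \<noteq> {\<one>}"
  shows "card (admissible_classes G) = D_count G + 2"
proof -
  have "{{\<one>}} \<notin> D_classes G"
  proof
    assume "{{\<one>}} \<in> D_classes G"
    then obtain Y where "subgroup Y G" "Y \<noteq> {\<one>}" "conj_class Y = {{\<one>}}"
      unfolding D_classes_def by auto
    then show False using conj_class_eq_triv_iff by blast
  qed
  moreover have "{carrier G} \<notin> D_classes G"
  proof
    assume "{carrier G} \<in> D_classes G"
    then obtain Y where "subgroup Y G" "normalizer G Y \<noteq> Y" "conj_class Y = {carrier G}"
      unfolding D_classes_def by auto
    then show False using conj_class_eq_carrier_iff normalizer_carrier by blast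
  qed
  moreover have "{{\<one>}} \<noteq> {carrier G}" using assms(2) by auto
  ultimately show ?thesis
    unfolding admissible_classes_def D_count_eq_card_D_classes using finite_D_classes[OF assms(1)]
    by simp
qed

end

locale finite_group_pair = H: group H + K: group K
  for H :: "('a, 'b) monoid_scheme" and K :: "('c, 'd) monoid_scheme" +
  assumes finite_H: "finite (carrier H)" and finite_K: "finite (carrier K)"
    and nontrivial_H: "carrier H \<noteq> {\<one>\<^bsub>H\<^esub>}" and nontrivial_K: "carrier K \<noteq> {\<one>\<^bsub>K\<^esub>}"
begin

sublocale HK: group "H \<times>\<times> K"
  using DirProd_group H.is_group K.is_group by blast

definition product_classes :: "('a \<times> 'c) set set set" where
  "product_classes = (\<lambda>(c, d). conj_class_prod c d) `
     (admissible_classes H \<times> admissible_classes K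
        - {({{\<one>\<^bsub>H\<^esub>}}, {{\<one>\<^bsub>K\<^esub>}}), ({carrier H}, {carrier K})})"

lemma inj_on_conj_class_prod:
  "inj_on (\<lambda>(c, d). conj_class_prod c d) (admissible_classes H \<times> admissible_classes K)"
proof (rule inj_onI, clarify)
  fix c d c' d'
  assume mem: "c \<in> admissible_classes H" "d \<in> admissible_classes K"
    "c' \<in> admissible_classes H" "d' \<in> admissible_classes K"
    and eq: "conj_class_prod c d = conj_class_prod c' d'"
  have nonempty: "x \<noteq> {}" "\<And>A. A \<in> x \<Longrightarrow> A \<noteq> {}"
    if "x \<in> admissible_classes G" "group G" for x and G :: "('e, 'f) monoid_scheme"
    using that group.mem_admissible_classes_iff group.conj_class_nonempty by metis+
  show "c = c' \<and> d = d'"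
    using image_fst_conj_class_prod[of d c] image_fst_conj_class_prod[of d' c']
      image_snd_conj_class_prod[of c d] image_snd_conj_class_prod[of c' d']
      nonempty[OF mem(1) H.is_group] nonempty[OF mem(2) K.is_group]
      nonempty[OF mem(3) H.is_group] nonempty[OF mem(4) K.is_group] eq
    by metis
qed

lemma card_product_classes: "card product_classes = (D_count H + 2) * (D_count K + 2) - 2"
proof -
  have "card (admissible_classes H \<times> admissible_classes K) = (D_count H + 2) * (D_count K + 2)"
    using H.card_admissible_classes[OF finite_H nontrivial_H]
      K.card_admissible_classes[OF finite_K nontrivial_K] by (simp add: card_cartesian_product)
  moreover have "finite (admissible_classes H \<times> admissible_classes K)"
    using H.finite_D_classes[OF finite_H] K.finite_D_classes[OF finite_K]
    by (simp add: admissible_classes_def)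
  moreover have "{({{\<one>\<^bsub>H\<^esub>}}, {{\<one>\<^bsub>K\<^esub>}}), ({carrier H}, {carrier K})}
      \<subseteq> admissible_classes H \<times> admissible_classes K"
    by (simp add: admissible_classes_def)
  moreover have "card {({{\<one>\<^bsub>H\<^esub>}}, {{\<one>\<^bsub>K\<^esub>}}), ({carrier H}, {carrier K})} = 2"
    using nontrivial_H by auto
  ultimately show ?thesis
    unfolding product_classes_def
    using card_image[OF inj_on_subset[OF inj_on_conj_class_prod Diff_subset]]
    by (simp add: card_Diff_subset)
qed

lemma product_classes_subset_D_classes: "product_classes \<subseteq> D_classes (H \<times>\<times> K)"
proof (unfold product_classes_def, rule image_subsetI)
  fix p
  assume p: "p \<in> admissible_classes H \<times> admissible_classes K
    - {({{\<one>\<^bsub>H\<^esub>}}, {{\<one>\<^bsub>K\<^esub>}}), ({carrier H}, {carrier K})}"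
  obtain c d where p_eq: "p = (c, d)" by fastforce
  have mem: "(c, d) \<in> admissible_classes H \<times> admissible_classes K"
    and excl: "(c, d) \<notin> {({{\<one>\<^bsub>H\<^esub>}}, {{\<one>\<^bsub>K\<^esub>}}), ({carrier H}, {carrier K})}"
    using p p_eq by auto
  obtain A where A: "subgroup A H" "c = H.conj_class A"
    and admA: "A = {\<one>\<^bsub>H\<^esub>} \<or> A = carrier H \<or> normalizer H A \<noteq> A"
    using mem H.mem_admissible_classes_iff by blast
  obtain B where B: "subgroup B K" "d = K.conj_class B"
    and admB: "B = {\<one>\<^bsub>K\<^esub>} \<or> B = carrier K \<or> normalizer K B \<noteq> B"
    using mem K.mem_admissible_classes_iff by blast
  have AB: "A \<subseteq> carrier H" "B \<subseteq> carrier K" "A \<noteq> {}" "B \<noteq> {}"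
    using A(1) B(1) subgroup.subset subgroup.one_closed by blast+
  have not_both: "\<not> (A = {\<one>\<^bsub>H\<^esub>} \<and> B = {\<one>\<^bsub>K\<^esub>})" "\<not> (A = carrier H \<and> B = carrier K)"
    using excl A(2) B(2) H.conj_class_triv K.conj_class_triv H.conj_class_carrier K.conj_class_carrier
    by auto
  have "A \<times> B \<noteq> {\<one>\<^bsub>H \<times>\<times> K\<^esub>}"
    using not_both(1) AB by (auto simp: times_eq_iff)
  moreover have "normalizer (H \<times>\<times> K) (A \<times> B) \<noteq> A \<times> B"
    using normalizer_DirProd[OF H.is_group K.is_group AB] AB admA admB not_both
      H.normalizer_triv K.normalizer_triv by (auto simp: times_eq_iff)
  moreover have "subgroup (A \<times> B) (H \<times>\<times> K)"
    using DirProd_subgroups[OF H.is_group A(1) K.is_group B(1)] .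
  ultimately show "(\<lambda>(c, d). conj_class_prod c d) p \<in> D_classes (H \<times>\<times> K)"
    unfolding D_classes_def p_eq A(2) B(2) prod.case conj_class_DirProd[OF H.is_group K.is_group AB(1,2), symmetric]
    by blast
qed

lemma conj_class_notin_product_classes:
  assumes "subgroup Y (H \<times>\<times> K)"
    and "\<not> (\<exists>A B. Y = A \<times> B \<and> H.conj_class A \<in> admissible_classes H \<and> K.conj_class B \<in> admissible_classes K)"
  shows "HK.conj_class Y \<notin> product_classes"
proof
  assume "HK.conj_class Y \<in> product_classes"
  then obtain c d where cd: "c \<in> admissible_classes H" "d \<in> admissible_classes K"
    and eq: "HK.conj_class Y = conj_class_prod c d"
    unfolding product_classes_def by auto
  have "Y \<in> conj_class_prod c d" using eq HK.self_in_conj_class[OF subgroup.subset[OF assms(1)]] by simp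
  then obtain A B where Y: "Y = A \<times> B" and AB: "A \<in> c" "B \<in> d" unfolding conj_class_prod_def by blast
  obtain A0 where A0: "subgroup A0 H" "c = H.conj_class A0"
    using cd(1) H.mem_admissible_classes_iff by blast
  obtain B0 where B0: "subgroup B0 K" "d = K.conj_class B0"
    using cd(2) K.mem_admissible_classes_iff by blast
  have "H.conj_class A = c" "K.conj_class B = d"
    using H.conj_class_memD(5)[OF A0(1)] K.conj_class_memD(5)[OF B0(1)] A0 B0 AB by auto
  then show False using assms(2) Y cd by blast
qed

lemma D_classes_not_subset_product_classes:
  assumes "subgroup Y (H \<times>\<times> K)" "Y \<noteq> {\<one>\<^bsub>H \<times>\<times> K\<^esub>}" "normalizer (H \<times>\<times> K) Y \<noteq> Y"
    and "\<not> (\<exists>A B. Y = A \<times> B \<and> H.conj_class A \<in> admissible_classes H \<and> K.conj_class B \<in> admissible_classes K)"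
  shows "\<not> D_classes (H \<times>\<times> K) \<subseteq> product_classes"
proof -
  have "HK.conj_class Y \<in> D_classes (H \<times>\<times> K)" unfolding D_classes_def using assms(1-3) by blast
  then show ?thesis using conj_class_notin_product_classes[OF assms(1,4)] by blast
qed

end

section \<open>Nilpotent groups satisfy the normalizer condition\<close>

context group
begin

abbreviation lower_central_series :: "nat \<Rightarrow> 'a set"
  where "lower_central_series i \<equiv> (lower_central_step G ^^ i) (carrier G)"

lemma lower_central_series_subgroup: "subgroup (lower_central_series i) G"
proof (induction i)
  case 0
  then show ?case by (simp add: subgroup_self)
next
  case (Suc i)
  have "{h \<otimes> g \<otimes> inv h \<otimes> inv g | h g. h \<in> lower_central_series i \<and> g \<in> carrier G} \<subseteq> carrier G"
    using subgroup.subset[OF Suc] by blast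
  then show ?case unfolding funpow.simps comp_def lower_central_step_def
    using generate_is_subgroup by blast
qed

lemma lower_central_series_Suc:
  "lower_central_series (Suc i) =
     generate G {h \<otimes> g \<otimes> inv h \<otimes> inv g | h g. h \<in> lower_central_series i \<and> g \<in> carrier G}"
  by (simp add: lower_central_step_def)

lemma commutator_in_lower_central_series:
  assumes "h \<in> lower_central_series i" "g \<in> carrier G"
  shows "h \<otimes> g \<otimes> inv h \<otimes> inv g \<in> lower_central_series (Suc i)"
  unfolding lower_central_series_Suc by (rule generate.incl) (use assms in blast)

lemma subset_normalizer_if_commutators_in:
  assumes A: "subgroup A G" and S: "subgroup S G"
    and comm: "\<And>s a. s \<in> S \<Longrightarrow> a \<in> A \<Longrightarrow> s \<otimes> a \<otimes> inv s \<otimes> inv a \<in> A"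
  shows "S \<subseteq> normalizer G A"
proof
  fix s assume s: "s \<in> S"
  have sc: "s \<in> carrier G" using s subgroup.subset[OF S] by blast
  have conj_in: "t \<otimes> a \<otimes> inv t \<in> A" if "t \<in> S" "a \<in> A" for t a
  proof -
    have "t \<in> carrier G" "a \<in> carrier G" using that subgroup.subset[OF S] subgroup.subset[OF A] by blast+
    moreover have "t \<otimes> a \<otimes> inv t \<otimes> inv a \<otimes> a \<in> A"
      using comm[OF that] subgroup.m_closed[OF A] that(2) by blast
    ultimately show ?thesis by simp
  qed
  have "(\<lambda>a. s \<otimes> a \<otimes> inv s) ` A = A"
  proof
    show "(\<lambda>a. s \<otimes> a \<otimes> inv s) ` A \<subseteq> A" using conj_in[OF s] by blast
    show "A \<subseteq> (\<lambda>a. s \<otimes> a \<otimes> inv s) ` A"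
    proof
      fix a assume a: "a \<in> A"
      have "a = s \<otimes> (inv s \<otimes> a \<otimes> inv (inv s)) \<otimes> inv s"
        using a sc subgroup.subset[OF A] by (simp add: m_assoc subsetD)
      moreover have "inv s \<otimes> a \<otimes> inv (inv s) \<in> A"
        using conj_in[OF subgroup.m_inv_closed[OF S s] a] .
      ultimately show "a \<in> (\<lambda>a. s \<otimes> a \<otimes> inv s) ` A" by blast
    qed
  qed
  then show "s \<in> normalizer G A" using mem_normalizer_iff[OF subgroup.subset[OF A]] sc by blast
qed

text \<open>If \<open>\<gamma>\<^sub>j \<not>\<subseteq> A\<close> but \<open>\<gamma>\<^sub>j\<^sub>+\<^sub>1 \<subseteq> A\<close>, then \<open>[\<gamma>\<^sub>j, A] \<subseteq> A\<close>, so \<open>\<gamma>\<^sub>j\<close> normalizes \<open>A\<close>.\<close>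

lemma nilpotent_imp_normalizer_ne:
  assumes nil: "nilpotent_group G" and A: "subgroup A G" and ne: "A \<noteq> carrier G"
  shows "normalizer G A \<noteq> A"
proof -
  obtain n where "lower_central_series n = {\<one>}" using nil unfolding nilpotent_group_def by blast
  then have "lower_central_series n \<subseteq> A" using subgroup.one_closed[OF A] by simp
  then obtain i where i: "lower_central_series i \<subseteq> A"
    and least: "\<And>j. j < i \<Longrightarrow> \<not> lower_central_series j \<subseteq> A"
    using exists_least_iff[of "\<lambda>i. lower_central_series i \<subseteq> A"] by blast
  have "i \<noteq> 0" using i ne subgroup.subset[OF A] by auto
  then obtain j where ij: "i = Suc j" using not0_implies_Suc by blast
  obtain x where x: "x \<in> lower_central_series j" "x \<notin> A" using least[of j] ij by blast
  have "lower_central_series j \<subseteq> normalizer G A"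
  proof (rule subset_normalizer_if_commutators_in[OF A lower_central_series_subgroup])
    fix s a assume "s \<in> lower_central_series j" "a \<in> A"
    then show "s \<otimes> a \<otimes> inv s \<otimes> inv a \<in> A"
      using commutator_in_lower_central_series subgroup.subset[OF A] i ij by blast
  qed
  then show ?thesis using x by blast
qed

end

section \<open>Sylow subgroups under the normalizer condition\<close>

context group
begin

lemma exists_sylow_subgroup:
  assumes fin: "finite (carrier G)" and p: "Factorial_Ring.prime p"
  obtains P a m where "subgroup P G" "card P = p ^ a" "order G = p ^ a * m" "\<not> p dvd m"
proof -
  have "order G \<noteq> 0" using fin order_gt_0_iff_finite by auto
  moreover have "\<not> is_unit p" using p not_prime_unit by blast
  ultimately obtain m where m: "order G = p ^ multiplicity p (order G) * m" "\<not> p dvd m"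
    using multiplicity_decompose' by blast
  obtain P where "subgroup P G" "card P = p ^ multiplicity p (order G)"
    using sylow_thm[OF p is_group m(1) fin] by blast
  then show ?thesis using that m by blast
qed

lemma pow_card_subgroup_eq_one:
  assumes "subgroup Q G" "y \<in> Q" "finite Q"
  shows "y [^] card Q = \<one>"
proof -
  interpret Q: group "G\<lparr>carrier := Q\<rparr>" using subgroup_imp_group[OF assms(1)] .
  have "y [^]\<^bsub>G\<lparr>carrier := Q\<rparr>\<^esub> order (G\<lparr>carrier := Q\<rparr>) = \<one>\<^bsub>G\<lparr>carrier := Q\<rparr>\<^esub>"
    using Q.pow_order_eq_1 assms(2) by simp
  then show ?thesis by (simp add: order_def flip: nat_pow_consistent)
qed

lemma card_subgroup_dvd:
  assumes "subgroup A G" "subgroup B G" "A \<subseteq> B"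
  shows "card A dvd card B"
proof -
  interpret B: group "G\<lparr>carrier := B\<rparr>" using subgroup_imp_group[OF assms(2)] .
  have "card (rcosets\<^bsub>G\<lparr>carrier := B\<rparr>\<^esub> A) * card A = card B"
    using B.lagrange[OF subgroup_incl[OF assms]] by (simp add: order_def)
  then show ?thesis by (metis dvd_triv_right)
qed

text \<open>The image of an element of a \<open>p\<close>-subgroup of \<open>N(P)\<close> in \<open>N(P)/P\<close> has \<open>p\<close>-power order
  dividing the \<open>p'\<close>-number \<open>|N(P)/P|\<close>, hence lies in \<open>P\<close>.\<close>

lemma sylow_contains_p_subgroup_of_normalizer:
  assumes fin: "finite (carrier G)" and p: "Factorial_Ring.prime p"
    and P: "subgroup P G" "card P = p ^ a" "order G = p ^ a * m" "\<not> p dvd m"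
    and Q: "subgroup Q G" "card Q = p ^ a" "Q \<subseteq> normalizer G P"
  shows "Q \<subseteq> P"
proof
  fix y assume yQ: "y \<in> Q"
  define M where "M = G\<lparr>carrier := normalizer G P\<rparr>"
  have Ps: "P \<subseteq> carrier G" using subgroup.subset[OF P(1)] .
  have Msub: "subgroup (normalizer G P) G" using normalizer_imp_subgroup[OF Ps] .
  interpret nP: normal P M unfolding M_def using subgroup_in_normalizer[OF P(1)] .
  interpret MP: group "M Mod P" using nP.factorgroup_is_group .
  have yM: "y \<in> carrier M" unfolding M_def using yQ Q(3) by auto
  have yc: "y \<in> carrier G" using yQ subgroup.subset[OF Q(1)] by blast
  define c where "c = P #>\<^bsub>M\<^esub> y"
  have cc: "c \<in> carrier (M Mod P)" unfolding c_def carrier_FactGroup using yM by blast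
  have "y [^] (p ^ a) = \<one>"
    using pow_card_subgroup_eq_one[OF Q(1) yQ] Q(2) fin subgroup.subset[OF Q(1)] finite_subset by metis
  then have "y [^]\<^bsub>M\<^esub> (p ^ a) = \<one>\<^bsub>M\<^esub>" unfolding M_def by (simp flip: nat_pow_consistent)
  then have "c [^]\<^bsub>M Mod P\<^esub> (p ^ a) = \<one>\<^bsub>M Mod P\<^esub>"
    unfolding c_def using nP.FactGroup_pow[OF yM] nP.coset_mult_one nP.subset by simp
  then have ord_p: "MP.ord c dvd p ^ a" using MP.pow_eq_id[OF cc] by blast
  have "order (M Mod P) * card P = card (normalizer G P)"
    using nP.lagrange[OF nP.subgroup_axioms] unfolding M_def FactGroup_def order_def by simp
  moreover have "card (normalizer G P) dvd order G" using lagrange[OF Msub] by (metis dvd_triv_right)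
  ultimately have "order (M Mod P) * p ^ a dvd p ^ a * m" using P(2,3) by simp
  then have "order (M Mod P) dvd m" using p by (simp add: mult.commute prime_gt_0_nat)
  then have "MP.ord c dvd gcd (p ^ a) m" using ord_p MP.ord_dvd_group_order[OF cc] by (meson dvd_trans gcd_greatest)
  moreover have "coprime (p ^ a) m" using p P(4) by (simp add: prime_imp_coprime coprime_power_left_iff)
  ultimately have "MP.ord c = 1" by (metis coprime_iff_gcd_eq_1 nat_dvd_1_iff_1)
  then have "c = P" using MP.ord_eq_1[OF cc] by simp
  then have "P #> y = P" unfolding c_def M_def r_coset_def by simp
  then show "y \<in> P" using rcos_self[OF yc P(1)] by simp
qed

lemma normalizer_normalizer_sylow:
  assumes fin: "finite (carrier G)" and p: "Factorial_Ring.prime p"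
    and P: "subgroup P G" "card P = p ^ a" "order G = p ^ a * m" "\<not> p dvd m"
  shows "normalizer G (normalizer G P) = normalizer G P"
proof
  define M where "M = normalizer G P"
  have Ps: "P \<subseteq> carrier G" using subgroup.subset[OF P(1)] .
  have Msub: "subgroup M G" unfolding M_def using normalizer_imp_subgroup[OF Ps] .
  have Ms: "M \<subseteq> carrier G" using subgroup.subset[OF Msub] .
  show "M \<subseteq> normalizer G M" using subgroup_subset_normalizer[OF Msub] .
  show "normalizer G M \<subseteq> M"
  proof
    fix g assume g: "g \<in> normalizer G M"
    have gc: "g \<in> carrier G" and gM: "(\<lambda>x. g \<otimes> x \<otimes> inv g) ` M = M"
      using g mem_normalizer_iff[OF Ms] by auto
    define Q where "Q = (\<lambda>x. g \<otimes> x \<otimes> inv g) ` P"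
    have "Q \<subseteq> M" unfolding Q_def using subgroup_subset_normalizer[OF P(1)] gM M_def by blast
    moreover have "subgroup Q G"
      unfolding Q_def using subgroup_conjugation_is_surj2[OF gc P(1)] conj_set_eq_image[OF Ps gc] by simp
    moreover have "card Q = p ^ a"
      unfolding Q_def using card_conj_set[OF Ps gc] conj_set_eq_image[OF Ps gc] P(2) by simp
    ultimately have "Q \<subseteq> P" using sylow_contains_p_subgroup_of_normalizer[OF fin p P] M_def by blast
    then have "Q = P"
      using card_subset_eq[OF finite_subset[OF Ps fin]] \<open>card Q = p ^ a\<close> P(2) by simp
    then show "g \<in> M" unfolding M_def using mem_normalizer_iff[OF Ps] gc Q_def by simp
  qed
qed

lemma normalizer_condition_imp_sylow_normal:
  assumes fin: "finite (carrier G)"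
    and NC: "\<And>A. subgroup A G \<Longrightarrow> A \<noteq> carrier G \<Longrightarrow> normalizer G A \<noteq> A"
    and p: "Factorial_Ring.prime p" and P: "subgroup P G" "card P = p ^ a" "order G = p ^ a * m" "\<not> p dvd m"
  shows "normalizer G P = carrier G"
  using NC[OF normalizer_imp_subgroup[OF subgroup.subset[OF P(1)]]]
    normalizer_normalizer_sylow[OF fin p P] by blast

end

section \<open>The normalizer condition implies nilpotency\<close>

lemma (in group_action) orbit_subset_invariant:
  assumes "\<And>g C. g \<in> carrier G \<Longrightarrow> C \<in> Xs \<Longrightarrow> \<phi> g C \<in> Xs" "C \<in> Xs"
  shows "orbit G \<phi> C \<subseteq> Xs"
  unfolding orbit_def using assms by blast

lemma (in group_action) orbit_of_non_fixed_point:
  assumes "C \<in> E" "g \<in> carrier G" "\<phi> g C \<noteq> C" "D \<in> orbit G \<phi> C"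
  shows "\<exists>h\<in>carrier G. \<phi> h D \<noteq> D"
proof (rule ccontr)
  assume fixed: "\<not> (\<exists>h\<in>carrier G. \<phi> h D \<noteq> D)"
  have "D \<in> E" using assms(1,4) element_image unfolding orbit_def by blast
  then have "C \<in> orbit G \<phi> D" using orbit_sym assms by blast
  then have "C = D" using fixed unfolding orbit_def by auto
  then show False using fixed assms(2,3) by blast
qed

text \<open>The non-fixed points of an invariant set split into orbits of size divisible by \<open>p\<close>.\<close>

lemma (in group_action) dvd_card_fixed_points:
  assumes XE: "Xs \<subseteq> E" and finX: "finite Xs"
    and inv: "\<And>g C. g \<in> carrier G \<Longrightarrow> C \<in> Xs \<Longrightarrow> \<phi> g C \<in> Xs"
    and orb: "\<And>C. C \<in> Xs \<Longrightarrow> card (orbit G \<phi> C) > 1 \<Longrightarrow> p dvd card (orbit G \<phi> C)"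
    and pX: "p dvd card Xs"
  shows "p dvd card {C \<in> Xs. \<forall>g \<in> carrier G. \<phi> g C = C}"
proof -
  define Fx where "Fx = {C \<in> Xs. \<forall>g \<in> carrier G. \<phi> g C = C}"
  define Os where "Os = orbit G \<phi> ` (Xs - Fx)"
  have orb_sub: "orbit G \<phi> C \<subseteq> Xs - Fx" if "C \<in> Xs - Fx" for C
    using orbit_subset_invariant[OF inv] orbit_of_non_fixed_point that XE unfolding Fx_def by blast
  have U: "\<Union> Os = Xs - Fx" unfolding Os_def using orb_sub orbit_refl XE by blast
  have disj: "pairwise disjnt Os"
  proof (rule pairwiseI)
    fix o1 o2 assume "o1 \<in> Os" "o2 \<in> Os" "o1 \<noteq> o2"
    moreover have "Os \<subseteq> orbits G E \<phi>" using XE unfolding Os_def orbits_def by blast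
    ultimately show "disjnt o1 o2" using disjoint_union unfolding disjnt_def by blast
  qed
  have fin_orb: "finite A" if "A \<in> Os" for A
    using that orb_sub finX finite_subset unfolding Os_def by blast
  have cards: "card (Xs - Fx) = sum card Os" using card_Union_disjoint[OF disj fin_orb] U by simp
  have "p dvd card A" if A: "A \<in> Os" for A
  proof -
    obtain C g where C: "C \<in> Xs" "A = orbit G \<phi> C" and g: "g \<in> carrier G" "\<phi> g C \<noteq> C"
      using A unfolding Os_def Fx_def by blast
    have "{C, \<phi> g C} \<subseteq> A" using C g orbit_refl XE unfolding orbit_def by blast
    then have "card {C, \<phi> g C} \<le> card A" using fin_orb[OF A] card_mono by blast
    then show ?thesis using orb C g(2) by simp
  qed
  then have "p dvd card (Xs - Fx)" using cards by (simp add: dvd_sum)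
  moreover have "card Xs = card Fx + card (Xs - Fx)"
    using finX card_Diff_subset[of Fx Xs] card_mono[of Xs Fx] unfolding Fx_def
    by (simp add: finite_subset)
  ultimately have "p dvd card Fx + card (Xs - Fx)" "p dvd card (Xs - Fx)" using pX by simp_all
  then show ?thesis unfolding Fx_def using dvd_add_left_iff by blast
qed

definition all_sylow_subgroups_normal :: "('a, 'b) monoid_scheme \<Rightarrow> bool" where
  "all_sylow_subgroups_normal G \<longleftrightarrow>
     (\<forall>p P a m. Factorial_Ring.prime p \<longrightarrow> subgroup P G \<longrightarrow> card P = p ^ a \<longrightarrow>
        order G = p ^ a * m \<longrightarrow> \<not> p dvd m \<longrightarrow> normalizer G P = carrier G)"

lemma all_sylow_subgroups_normalD:
  assumes "all_sylow_subgroups_normal G" "Factorial_Ring.prime p"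
    "subgroup P G" "card P = p ^ a" "order G = p ^ a * m" "\<not> p dvd m"
  shows "normalizer G P = carrier G"
  using assms unfolding all_sylow_subgroups_normal_def by blast

context group
begin

lemma coprime_subgroups_inter:
  assumes "subgroup P G" "subgroup Q G" "finite (carrier G)" "coprime (card P) (card Q)"
  shows "P \<inter> Q = {\<one>}"
proof -
  have I: "subgroup (P \<inter> Q) G" using subgroups_Inter_pair assms by blast
  then have "card (P \<inter> Q) dvd card P" "card (P \<inter> Q) dvd card Q"
    using card_subgroup_dvd assms(1,2) by auto
  then have "card (P \<inter> Q) dvd gcd (card P) (card Q)" by (rule gcd_greatest)
  also have "gcd (card P) (card Q) = 1" using assms(4) by (simp add: coprime_iff_gcd_eq_1)
  finally have "card (P \<inter> Q) = 1" by simp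
  then obtain x where "P \<inter> Q = {x}" using card_1_singletonE by blast
  then show ?thesis using subgroup.one_closed[OF I] by auto
qed

lemma normal_subgroups_commute:
  assumes "normalizer G P = carrier G" "normalizer G Q = carrier G" "subgroup P G" "subgroup Q G"
    "P \<inter> Q = {\<one>}" "h \<in> Q" "y \<in> P"
  shows "h \<otimes> y \<otimes> inv h = y"
proof -
  have Ps: "P \<subseteq> carrier G" and Qs: "Q \<subseteq> carrier G" using assms(3,4) subgroup.subset by blast+
  have hc: "h \<in> carrier G" and yc: "y \<in> carrier G" using assms Ps Qs by blast+
  have conj_in: "g \<otimes> x \<otimes> inv g \<in> S" if "normalizer G S = carrier G" "S \<subseteq> carrier G" "g \<in> carrier G" "x \<in> S" for S g x
    using that mem_normalizer_iff[OF that(2), of g] by blast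
  define c where "c = h \<otimes> y \<otimes> inv h \<otimes> inv y"
  have "c \<in> P" unfolding c_def
    using conj_in[OF assms(1) Ps hc assms(7)] subgroup.m_closed[OF assms(3)] subgroup.m_inv_closed[OF assms(3) assms(7)] by blast
  moreover have "h \<otimes> (y \<otimes> inv h \<otimes> inv y) \<in> Q"
    using conj_in[OF assms(2) Qs yc subgroup.m_inv_closed[OF assms(4) assms(6)]] subgroup.m_closed[OF assms(4) assms(6)] by blast
  then have "c \<in> Q" unfolding c_def using hc yc by (simp add: m_assoc)
  ultimately have "c = \<one>" using assms(5) by blast
  then have "h \<otimes> y \<otimes> inv h \<otimes> inv y \<otimes> y = y" unfolding c_def using yc by simp
  then show ?thesis using hc yc by simp
qed

lemma conj_rcoset:
  assumes "Z \<lhd> G" "g \<in> carrier G" "y \<in> carrier G"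
  shows "(g <# (Z #> y)) #> inv g = Z #> (g \<otimes> y \<otimes> inv g)"
proof -
  interpret N: normal Z G by fact
  have Zy: "Z #> x = (\<lambda>z. z \<otimes> x) ` Z" for x unfolding r_coset_def by auto
  have "Z #> y \<subseteq> carrier G" using r_coset_subset_G[OF N.subset assms(3)] .
  then have "(g <# (Z #> y)) #> inv g = (\<lambda>z. g \<otimes> z \<otimes> inv g) ` ((\<lambda>z. z \<otimes> y) ` Z)"
    using conj_set_eq_image assms Zy by simp
  also have "\<dots> = (\<lambda>z. z \<otimes> (g \<otimes> y \<otimes> inv g)) ` Z"
  proof
    show "(\<lambda>z. g \<otimes> z \<otimes> inv g) ` (\<lambda>z. z \<otimes> y) ` Z \<subseteq> (\<lambda>z. z \<otimes> (g \<otimes> y \<otimes> inv g)) ` Z"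
    proof clarify
      fix z assume z: "z \<in> Z"
      have "g \<otimes> (z \<otimes> y) \<otimes> inv g = (g \<otimes> z \<otimes> inv g) \<otimes> (g \<otimes> y \<otimes> inv g)"
        using z N.subset assms by (simp add: m_assoc subsetD)
      moreover have "g \<otimes> z \<otimes> inv g \<in> Z" using N.inv_op_closed2 z assms(2) by simp
      ultimately show "g \<otimes> (z \<otimes> y) \<otimes> inv g \<in> (\<lambda>z. z \<otimes> (g \<otimes> y \<otimes> inv g)) ` Z" by blast
    qed
    show "(\<lambda>z. z \<otimes> (g \<otimes> y \<otimes> inv g)) ` Z \<subseteq> (\<lambda>z. g \<otimes> z \<otimes> inv g) ` (\<lambda>z. z \<otimes> y) ` Z"
    proof clarify
      fix z assume z: "z \<in> Z"
      have "z \<otimes> (g \<otimes> y \<otimes> inv g) = g \<otimes> ((inv g \<otimes> z \<otimes> g) \<otimes> y) \<otimes> inv g"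
        using z N.subset assms by (simp add: m_assoc subsetD)
      moreover have "inv g \<otimes> z \<otimes> g \<in> Z" using N.inv_op_closed1 z assms(2) by simp
      ultimately show "z \<otimes> (g \<otimes> y \<otimes> inv g) \<in> (\<lambda>z. g \<otimes> z \<otimes> inv g) ` (\<lambda>z. z \<otimes> y) ` Z" by blast
    qed
  qed
  finally show ?thesis using Zy by simp
qed

abbreviation conj_action :: "'a \<Rightarrow> 'a set \<Rightarrow> 'a set"
  where "conj_action \<equiv> \<lambda>g. \<lambda>A \<in> {A. A \<subseteq> carrier G}. g <# A #> inv g"

lemma conj_action_rcoset:
  assumes "Z \<lhd> G" "g \<in> carrier G" "y \<in> carrier G"
  shows "conj_action g (Z #> y) = Z #> (g \<otimes> y \<otimes> inv g)"
  using conj_rcoset[OF assms] r_coset_subset_G[OF normal_imp_subgroup[OF assms(1), THEN subgroup.subset] assms(3)]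
  by simp

lemma sylow_subset_stabilizer_rcoset:
  assumes fin: "finite (carrier G)" and sylow_normal: "all_sylow_subgroups_normal G"
    and Z: "Z \<lhd> G" and p: "Factorial_Ring.prime p" and q: "Factorial_Ring.prime q" "q \<noteq> p"
    and P: "subgroup P G" "card P = p ^ a" "order G = p ^ a * m" "\<not> p dvd m"
    and Q: "subgroup Q G" "card Q = q ^ b" "order G = q ^ b * mq" "\<not> q dvd mq"
    and y: "y \<in> P"
  shows "Q \<subseteq> stabilizer G conj_action (Z #> y)"
proof
  fix h assume h: "h \<in> Q"
  have hc: "h \<in> carrier G" and yc: "y \<in> carrier G"
    using h y subgroup.subset[OF Q(1)] subgroup.subset[OF P(1)] by blast+
  have "coprime p q" using p q by (simp add: primes_coprime)
  then have "coprime (card P) (card Q)" using P(2) Q(2) by simp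
  then have "P \<inter> Q = {\<one>}" using coprime_subgroups_inter[OF P(1) Q(1) fin] by simp
  then have "h \<otimes> y \<otimes> inv h = y"
    using normal_subgroups_commute[OF all_sylow_subgroups_normalD[OF sylow_normal p P]
        all_sylow_subgroups_normalD[OF sylow_normal q(1) Q] P(1) Q(1) _ h y] by blast
  then show "h \<in> stabilizer G conj_action (Z #> y)"
    unfolding stabilizer_def using conj_action_rcoset[OF Z hc yc] hc by simp
qed

text \<open>The orbit size is prime to every \<open>q \<noteq> p\<close>, as a Sylow \<open>q\<close>-subgroup lies in the stabilizer.\<close>

lemma prime_dvd_card_orbit_rcoset:
  assumes fin: "finite (carrier G)"
    and sylow_normal: "all_sylow_subgroups_normal G"
    and Z: "Z \<lhd> G" and p: "Factorial_Ring.prime p"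
    and P: "subgroup P G" "card P = p ^ a" "order G = p ^ a * m" "\<not> p dvd m"
    and y: "y \<in> P" and nontriv: "card (orbit G conj_action (Z #> y)) > 1"
  shows "p dvd card (orbit G conj_action (Z #> y))"
proof -
  interpret act: group_action G "{A. A \<subseteq> carrier G}" conj_action
    using action_by_conjugation_on_power_set .
  have yc: "y \<in> carrier G" using y subgroup.subset[OF P(1)] by blast
  have ZyE: "Z #> y \<in> {A. A \<subseteq> carrier G}"
    using r_coset_subset_G[OF normal_imp_subgroup[OF Z, THEN subgroup.subset] yc] by blast
  obtain q where q: "Factorial_Ring.prime q" "q dvd card (orbit G conj_action (Z #> y))"
    using prime_factor_nat[of "card (orbit G conj_action (Z #> y))"] nontriv by auto
  show ?thesis
  proof (rule ccontr)
    assume "\<not> p dvd card (orbit G conj_action (Z #> y))"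
    then have "q \<noteq> p" using q(2) by blast
    obtain Q b mq where Q: "subgroup Q G" "card Q = q ^ b" "order G = q ^ b * mq" "\<not> q dvd mq"
      using exists_sylow_subgroup[OF fin q(1)] by blast
    have "q ^ b dvd card (stabilizer G conj_action (Z #> y))"
      using card_subgroup_dvd[OF Q(1) act.stabilizer_subgroup[OF ZyE]
          sylow_subset_stabilizer_rcoset[OF fin sylow_normal Z p q(1) \<open>q \<noteq> p\<close> P Q y]] Q(2)
      by simp
    then have "q * q ^ b dvd card (orbit G conj_action (Z #> y)) * card (stabilizer G conj_action (Z #> y))"
      by (rule mult_dvd_mono[OF q(2)])
    then have "q ^ b * q dvd q ^ b * mq"
      using act.orbit_stabilizer_theorem[OF ZyE] Q(3) by (simp add: mult.commute)
    then show False using q(1) Q(4) by (simp add: prime_gt_0_nat)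
  qed
qed

lemma rcosets_set_mult:
  assumes Z: "Z \<lhd> G" and P: "subgroup P G"
  shows "rcosets\<^bsub>G\<lparr>carrier := Z <#> P\<rparr>\<^esub> Z = (\<lambda>y. Z #> y) ` P"
proof
  interpret N: normal Z G by fact
  show "rcosets\<^bsub>G\<lparr>carrier := Z <#> P\<rparr>\<^esub> Z \<subseteq> (\<lambda>y. Z #> y) ` P"
  proof
    fix C assume "C \<in> rcosets\<^bsub>G\<lparr>carrier := Z <#> P\<rparr>\<^esub> Z"
    then obtain w where w: "w \<in> Z <#> P" "C = Z #>\<^bsub>G\<lparr>carrier := Z <#> P\<rparr>\<^esub> w"
      unfolding RCOSETS_def by auto
    then obtain z y where zy: "z \<in> Z" "y \<in> P" "C = Z #> (z \<otimes> y)"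
      unfolding set_mult_def r_coset_def by auto
    have "Z #> (z \<otimes> y) = (Z #> z) #> y"
      using coset_mult_assoc[OF N.subset] zy P N.subset subgroup.subset by blast
    then show "C \<in> (\<lambda>y. Z #> y) ` P" using zy N.rcos_const[OF is_group zy(1)] by simp
  qed
  show "(\<lambda>y. Z #> y) ` P \<subseteq> rcosets\<^bsub>G\<lparr>carrier := Z <#> P\<rparr>\<^esub> Z"
  proof clarify
    fix y assume y: "y \<in> P"
    have "y = \<one> \<otimes> y" using subgroup.mem_carrier[OF P y] by simp
    then have "y \<in> Z <#> P" unfolding set_mult_def using y N.one_closed by blast
    moreover have "Z #> y = Z #>\<^bsub>G\<lparr>carrier := Z <#> P\<rparr>\<^esub> y" unfolding r_coset_def by simp
    ultimately show "Z #> y \<in> rcosets\<^bsub>G\<lparr>carrier := Z <#> P\<rparr>\<^esub> Z"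
      unfolding RCOSETS_def by auto
  qed
qed

lemma prime_dvd_card_rcosets_sylow:
  assumes fin: "finite (carrier G)" and Z: "Z \<lhd> G" and p: "Factorial_Ring.prime p"
    and P: "subgroup P G" "card P = p ^ a" "order G = p ^ a * m" "\<not> p dvd m"
    and index: "p dvd card (rcosets Z)"
  shows "p dvd card ((\<lambda>y. Z #> y) ` P)"
proof (rule ccontr)
  assume np: "\<not> p dvd card ((\<lambda>y. Z #> y) ` P)"
  interpret N: normal Z G by fact
  define W where "W = Z <#> P"
  have Wsub: "subgroup W G"
    unfolding W_def using second_isomorphism_grp.normal_set_mult_subgroup Z P(1)
    unfolding second_isomorphism_grp_def second_isomorphism_grp_axioms_def by blast
  interpret W: group "G\<lparr>carrier := W\<rparr>" using subgroup_imp_group[OF Wsub] .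
  have "Z \<subseteq> W"
  proof
    fix z assume z: "z \<in> Z"
    then have "z = z \<otimes> \<one>" using N.subset by auto
    then show "z \<in> W" unfolding W_def set_mult_def using z subgroup.one_closed[OF P(1)] by blast
  qed
  moreover have "P \<subseteq> W"
  proof
    fix y assume y: "y \<in> P"
    then have "y = \<one> \<otimes> y" using subgroup.mem_carrier[OF P(1)] by simp
    then show "y \<in> W" unfolding W_def set_mult_def using y N.one_closed by blast
  qed
  ultimately have "card ((\<lambda>y. Z #> y) ` P) * card Z = card W" "card P dvd card W"
    using W.lagrange[OF subgroup_incl[OF N.subgroup_axioms Wsub]] rcosets_set_mult[OF Z P(1)]
      card_subgroup_dvd[OF P(1) Wsub] by (auto simp: order_def W_def)
  moreover have "coprime (p ^ a) (card ((\<lambda>y. Z #> y) ` P))"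
    using np p by (simp add: prime_imp_coprime coprime_power_left_iff)
  ultimately have "p ^ a dvd card Z" using P(2) by (metis coprime_dvd_mult_right_iff)
  then have "p * p ^ a dvd card (rcosets Z) * card Z" using index mult_dvd_mono by blast
  then have "p ^ a * p dvd p ^ a * m" using lagrange[OF N.subgroup_axioms] P(3) by (simp add: mult.commute)
  then show False using p P(4) by (simp add: prime_gt_0_nat)
qed

lemma commutators_in_normal_if_rcoset_fixed:
  assumes Z: "Z \<lhd> G" and y: "y \<in> carrier G"
    and fixed: "\<And>g. g \<in> carrier G \<Longrightarrow> Z #> (g \<otimes> y \<otimes> inv g) = Z #> y"
    and g: "g \<in> carrier G"
  shows "y \<otimes> g \<otimes> inv y \<otimes> inv g \<in> Z"
proof -
  interpret N: normal Z G by fact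
  have "g \<otimes> y \<otimes> inv g \<in> Z #> y"
    using fixed[OF g] rcos_self[of "g \<otimes> y \<otimes> inv g" Z] N.subgroup_axioms g y by simp
  then have "inv (g \<otimes> y \<otimes> inv g \<otimes> inv y) \<in> Z" using N.rcos_module_imp[OF is_group y] N.m_inv_closed by blast
  moreover have "inv (g \<otimes> y \<otimes> inv g \<otimes> inv y) = y \<otimes> g \<otimes> inv y \<otimes> inv g"
    using g y by (simp add: inv_mult_group m_assoc)
  ultimately show ?thesis by simp
qed

text \<open>The cosets \<open>Z y\<close>, \<open>y \<in> P\<close>, form a conjugation-invariant set of size divisible by \<open>p\<close>
  whose nontrivial orbits have size divisible by \<open>p\<close>.\<close>

lemma prime_dvd_card_fixed_rcosets:
  assumes fin: "finite (carrier G)" and sylow_normal: "all_sylow_subgroups_normal G"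
    and Z: "Z \<lhd> G" and p: "Factorial_Ring.prime p" "p dvd card (rcosets Z)"
    and P: "subgroup P G" "card P = p ^ a" "order G = p ^ a * m" "\<not> p dvd m"
  shows "p dvd card {C \<in> (\<lambda>y. Z #> y) ` P. \<forall>g\<in>carrier G. conj_action g C = C}"
proof -
  interpret N: normal Z G by fact
  interpret act: group_action G "{A. A \<subseteq> carrier G}" conj_action
    using action_by_conjugation_on_power_set .
  have Ps: "P \<subseteq> carrier G" using subgroup.subset[OF P(1)] .
  show ?thesis
  proof (rule act.dvd_card_fixed_points)
    show "(\<lambda>y. Z #> y) ` P \<subseteq> {A. A \<subseteq> carrier G}" using r_coset_subset_G[OF N.subset] Ps by blast
    show "finite ((\<lambda>y. Z #> y) ` P)" using fin Ps finite_subset by blast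
    show "p dvd card ((\<lambda>y. Z #> y) ` P)" by (rule prime_dvd_card_rcosets_sylow[OF fin Z p(1) P p(2)])
    show "p dvd card (orbit G conj_action C)" if "C \<in> (\<lambda>y. Z #> y) ` P" "1 < card (orbit G conj_action C)" for C
      using that prime_dvd_card_orbit_rcoset[OF fin sylow_normal Z p(1) P] by blast
    show "conj_action g C \<in> (\<lambda>y. Z #> y) ` P" if g: "g \<in> carrier G" and C: "C \<in> (\<lambda>y. Z #> y) ` P" for g C
    proof -
      obtain y where y: "y \<in> P" "C = Z #> y" using C by blast
      have "(\<lambda>x. g \<otimes> x \<otimes> inv g) ` P = P"
        using all_sylow_subgroups_normalD[OF sylow_normal p(1) P] mem_normalizer_iff[OF Ps] g by blast
      then have "g \<otimes> y \<otimes> inv g \<in> P" using y(1) by blast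
      then show ?thesis unfolding y(2) conj_action_rcoset[OF Z g subsetD[OF Ps y(1)]] by blast
    qed
  qed
qed

lemma exists_central_mod_normal:
  assumes fin: "finite (carrier G)" and sylow_normal: "all_sylow_subgroups_normal G"
    and Z: "Z \<lhd> G" and Zne: "Z \<noteq> carrier G"
  shows "\<exists>y\<in>carrier G. y \<notin> Z \<and> (\<forall>g\<in>carrier G. y \<otimes> g \<otimes> inv y \<otimes> inv g \<in> Z)"
proof -
  interpret N: normal Z G by fact
  have "card (rcosets Z) \<noteq> 1"
    using lagrange[OF N.subgroup_axioms] card_subset_eq[OF fin N.subset] Zne by (auto simp: order_def)
  then obtain p where p: "Factorial_Ring.prime p" "p dvd card (rcosets Z)" using prime_factor_nat by blast
  obtain P a m where P: "subgroup P G" "card P = p ^ a" "order G = p ^ a * m" "\<not> p dvd m"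
    using exists_sylow_subgroup[OF fin p(1)] by blast
  define Fx where "Fx = {C \<in> (\<lambda>y. Z #> y) ` P. \<forall>g\<in>carrier G. conj_action g C = C}"
  have Z1: "Z #> \<one> = Z" using coset_mult_one[OF N.subset] .
  have Z_fixed: "Z \<in> Fx"
  proof -
    have "Z \<in> (\<lambda>y. Z #> y) ` P" using subgroup.one_closed[OF P(1)] Z1 by force
    moreover have "conj_action g Z = Z" if "g \<in> carrier G" for g
      using conj_action_rcoset[OF Z that one_closed] Z1 that by simp
    ultimately show ?thesis unfolding Fx_def by blast
  qed
  have "p dvd card Fx" unfolding Fx_def by (rule prime_dvd_card_fixed_rcosets[OF fin sylow_normal Z p P])
  then have "Fx \<noteq> {Z}" using p(1) by auto
  then obtain C where "C \<in> Fx" "C \<noteq> Z" using Z_fixed by blast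
  then obtain y where y: "y \<in> P" "C = Z #> y" and fixed: "\<forall>g \<in> carrier G. conj_action g C = C"
    unfolding Fx_def by blast
  have yc: "y \<in> carrier G" using y subgroup.subset[OF P(1)] by blast
  have "y \<notin> Z" using N.rcos_const[OF is_group] y \<open>C \<noteq> Z\<close> by blast
  moreover have "y \<otimes> g \<otimes> inv y \<otimes> inv g \<in> Z" if "g \<in> carrier G" for g
    using commutators_in_normal_if_rcoset_fixed[OF Z yc _ that] fixed conj_action_rcoset[OF Z _ yc] y(2)
    by simp
  ultimately show ?thesis using yc by blast
qed

end

primrec upper_central_series :: "('a, 'b) monoid_scheme \<Rightarrow> nat \<Rightarrow> 'a set" where
  "upper_central_series G 0 = {\<one>\<^bsub>G\<^esub>}"
| "upper_central_series G (Suc i) = {x \<in> carrier G. \<forall>g\<in>carrier G.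
     x \<otimes>\<^bsub>G\<^esub> g \<otimes>\<^bsub>G\<^esub> inv\<^bsub>G\<^esub> x \<otimes>\<^bsub>G\<^esub> inv\<^bsub>G\<^esub> g \<in> upper_central_series G i}"

context group
begin

lemma commutator_mult:
  assumes "x \<in> carrier G" "y \<in> carrier G" "g \<in> carrier G"
  shows "(x \<otimes> y) \<otimes> g \<otimes> inv (x \<otimes> y) \<otimes> inv g
       = x \<otimes> (y \<otimes> g \<otimes> inv y \<otimes> inv g) \<otimes> inv x \<otimes> (x \<otimes> g \<otimes> inv x \<otimes> inv g)"
  using assms by (simp add: m_assoc inv_mult_group)

lemma commutator_inv:
  assumes "x \<in> carrier G" "g \<in> carrier G"
  shows "inv x \<otimes> g \<otimes> inv (inv x) \<otimes> inv g = inv x \<otimes> inv (x \<otimes> g \<otimes> inv x \<otimes> inv g) \<otimes> x"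
  using assms by (simp add: m_assoc inv_mult_group)

lemma commutator_conj:
  assumes "x \<in> carrier G" "h \<in> carrier G" "g \<in> carrier G"
  shows "(h \<otimes> x \<otimes> inv h) \<otimes> g \<otimes> inv (h \<otimes> x \<otimes> inv h) \<otimes> inv g
       = h \<otimes> (x \<otimes> (inv h \<otimes> g \<otimes> h) \<otimes> inv x \<otimes> inv (inv h \<otimes> g \<otimes> h)) \<otimes> inv h"
  using assms by (simp add: m_assoc inv_mult_group)

lemma central_mod_normal_subgroup:
  assumes "Z \<lhd> G"
  shows "subgroup {x \<in> carrier G. \<forall>g\<in>carrier G. x \<otimes> g \<otimes> inv x \<otimes> inv g \<in> Z} G"
    (is "subgroup ?S G")
proof -
  interpret N: normal Z G by fact
  have conjZ: "h \<otimes> z \<otimes> inv h \<in> Z" if "h \<in> carrier G" "z \<in> Z" for h z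
    using N.inv_op_closed2 that by blast
  show ?thesis
  proof (rule subgroupI)
    show "?S \<subseteq> carrier G" by auto
    show "?S \<noteq> {}" using N.one_closed by auto
  next
    fix x assume x: "x \<in> ?S"
    then have xc: "x \<in> carrier G" by simp
    have "inv x \<otimes> g \<otimes> inv (inv x) \<otimes> inv g \<in> Z" if g: "g \<in> carrier G" for g
    proof -
      have "x \<otimes> g \<otimes> inv x \<otimes> inv g \<in> Z" using x g by simp
      then have "inv x \<otimes> inv (x \<otimes> g \<otimes> inv x \<otimes> inv g) \<otimes> inv (inv x) \<in> Z"
        using conjZ[of "inv x"] N.m_inv_closed xc by blast
      then show ?thesis using commutator_inv[OF xc g] xc by simp
    qed
    then show "inv x \<in> ?S" using xc by simp
  next
    fix x y assume x: "x \<in> ?S" and y: "y \<in> ?S"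
    have xc: "x \<in> carrier G" and yc: "y \<in> carrier G" using x y by simp_all
    have "(x \<otimes> y) \<otimes> g \<otimes> inv (x \<otimes> y) \<otimes> inv g \<in> Z" if g: "g \<in> carrier G" for g
    proof -
      have "x \<otimes> (y \<otimes> g \<otimes> inv y \<otimes> inv g) \<otimes> inv x \<in> Z" using conjZ[OF xc] y g by simp
      then have "x \<otimes> (y \<otimes> g \<otimes> inv y \<otimes> inv g) \<otimes> inv x \<otimes> (x \<otimes> g \<otimes> inv x \<otimes> inv g) \<in> Z"
        using x g N.m_closed by simp
      then show ?thesis using commutator_mult[OF xc yc g] by simp
    qed
    then show "x \<otimes> y \<in> ?S" using xc yc by simp
  qed
qed

lemma central_mod_normal_is_normal:
  assumes "Z \<lhd> G"
  shows "{x \<in> carrier G. \<forall>g\<in>carrier G. x \<otimes> g \<otimes> inv x \<otimes> inv g \<in> Z} \<lhd> G"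
    (is "?S \<lhd> G")
proof -
  interpret N: normal Z G by fact
  have "h \<otimes> x \<otimes> inv h \<in> ?S" if h: "h \<in> carrier G" and x: "x \<in> ?S" for h x
  proof -
    have xc: "x \<in> carrier G" using x by simp
    have "(h \<otimes> x \<otimes> inv h) \<otimes> g \<otimes> inv (h \<otimes> x \<otimes> inv h) \<otimes> inv g \<in> Z" if g: "g \<in> carrier G" for g
    proof -
      have "inv h \<otimes> g \<otimes> h \<in> carrier G" using g h by simp
      then have "x \<otimes> (inv h \<otimes> g \<otimes> h) \<otimes> inv x \<otimes> inv (inv h \<otimes> g \<otimes> h) \<in> Z" using x by simp
      then show ?thesis using N.inv_op_closed2[OF h] commutator_conj[OF xc h g] by simp
    qed
    then show ?thesis using h xc by simp
  qed
  then show ?thesis using normal_inv_iff central_mod_normal_subgroup[OF assms] by blast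
qed

lemma upper_central_series_normal: "upper_central_series G i \<lhd> G"
proof (induction i)
  case 0
  then show ?case using one_is_normal by simp
next
  case (Suc i)
  then show ?case using central_mod_normal_is_normal by simp
qed

lemma upper_central_series_subset: "upper_central_series G i \<subseteq> carrier G"
  using normal_imp_subgroup[OF upper_central_series_normal] subgroup.subset by blast

lemma upper_central_series_mono: "upper_central_series G i \<subseteq> upper_central_series G (Suc i)"
proof
  fix x assume x: "x \<in> upper_central_series G i"
  interpret N: normal "upper_central_series G i" G using upper_central_series_normal .
  have xc: "x \<in> carrier G" using x N.subset by blast
  have "x \<otimes> g \<otimes> inv x \<otimes> inv g \<in> upper_central_series G i" if g: "g \<in> carrier G" for g
  proof -
    have "g \<otimes> inv x \<otimes> inv g \<in> upper_central_series G i"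
      using N.inv_op_closed2[OF g N.m_inv_closed[OF x]] .
    then have "x \<otimes> (g \<otimes> inv x \<otimes> inv g) \<in> upper_central_series G i" using x N.m_closed by blast
    then show ?thesis using xc g by (simp add: m_assoc)
  qed
  then show "x \<in> upper_central_series G (Suc i)" using xc by simp
qed

lemma upper_central_series_eq_carrier:
  assumes fin: "finite (carrier G)" and sylow_normal: "all_sylow_subgroups_normal G"
  shows "upper_central_series G (order G) = carrier G"
proof -
  have grow: "upper_central_series G i = carrier G \<or> i < card (upper_central_series G i)" for i
  proof (induction i)
    case 0
    then show ?case by simp
  next
    case (Suc i)
    show ?case
    proof (cases "upper_central_series G i = carrier G")
      case True
      then show ?thesis
        using upper_central_series_mono[of i] upper_central_series_subset[of "Suc i"] by blast
    next
      case False
      obtain y where "y \<in> carrier G" "y \<notin> upper_central_series G i"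
        "\<forall>g\<in>carrier G. y \<otimes> g \<otimes> inv y \<otimes> inv g \<in> upper_central_series G i"
        using exists_central_mod_normal[OF fin sylow_normal upper_central_series_normal False] by blast
      then have "upper_central_series G i \<subset> upper_central_series G (Suc i)"
        using upper_central_series_mono[of i] by auto
      then have "card (upper_central_series G i) < card (upper_central_series G (Suc i))"
        using psubset_card_mono finite_subset[OF upper_central_series_subset fin] by blast
      then show ?thesis using Suc False by simp
    qed
  qed
  have "card (upper_central_series G (order G)) \<le> order G"
    unfolding order_def using card_mono[OF fin upper_central_series_subset] .
  then show ?thesis using grow[of "order G"] by simp
qed

lemma lower_central_series_subset_upper:
  assumes "upper_central_series G n = carrier G" "j \<le> n"
  shows "lower_central_series j \<subseteq> upper_central_series G (n - j)"
  using assms(2)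
proof (induction j)
  case 0
  then show ?case using assms(1) by simp
next
  case (Suc j)
  then have "lower_central_series j \<subseteq> upper_central_series G (Suc (n - Suc j))"
    by (simp add: Suc_diff_Suc)
  then have "{h \<otimes> g \<otimes> inv h \<otimes> inv g | h g. h \<in> lower_central_series j \<and> g \<in> carrier G}
      \<subseteq> upper_central_series G (n - Suc j)"
    by auto
  then show ?case unfolding lower_central_series_Suc
    using generate_subgroup_incl normal_imp_subgroup[OF upper_central_series_normal] by blast
qed

lemma normalizer_condition_imp_nilpotent:
  assumes fin: "finite (carrier G)"
    and NC: "\<And>A. subgroup A G \<Longrightarrow> A \<noteq> carrier G \<Longrightarrow> normalizer G A \<noteq> A"
  shows "nilpotent_group G"
proof -
  have "all_sylow_subgroups_normal G"
    unfolding all_sylow_subgroups_normal_def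
    using normalizer_condition_imp_sylow_normal[OF fin NC] by blast
  then have "lower_central_series (order G) \<subseteq> upper_central_series G 0"
    using lower_central_series_subset_upper[OF upper_central_series_eq_carrier[OF fin]] by (metis diff_self_eq_0 order_refl)
  then have "lower_central_series (order G) \<subseteq> {\<one>}" by simp
  then have "lower_central_series (order G) = {\<one>}"
    using subgroup.one_closed[OF lower_central_series_subgroup] by blast
  then show ?thesis unfolding nilpotent_group_def using is_group by blast
qed

end

section \<open>Subgroups of a direct product of groups of coprime orders\<close>

context group
begin

lemma pow_eq_self_if_mod_order:
  assumes fin: "finite (carrier G)" and x: "x \<in> carrier G" and n: "n mod order G = 1 mod order G"
  shows "x [^] n = x"
proof (cases "order G = 1")
  case True
  then have "carrier G = {\<one>}" using order_one_triv_iff by blast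
  then show ?thesis using x by simp
next
  case False
  then have "n mod order G = 1" using n fin order_gt_0_iff_finite by (metis less_one mod_less nat_neq_iff)
  then have "n = order G * (n div order G) + 1" by (metis mult_div_mod_eq)
  then have "x [^] n = (x [^] order G) [^] (n div order G) \<otimes> x [^] (1::nat)"
    using x by (metis nat_pow_mult nat_pow_pow nat_pow_closed)
  then show ?thesis using x pow_order_eq_1 by simp
qed

end

lemma DirProd_pow:
  assumes "group H" "group K" "h \<in> carrier H" "k \<in> carrier K"
  shows "(h, k) [^]\<^bsub>H \<times>\<times> K\<^esub> (n::nat) = (h [^]\<^bsub>H\<^esub> n, k [^]\<^bsub>K\<^esub> n)"
  by (induction n) (simp_all add: assms)

lemma group_hom_fst:
  assumes "group H" "group K"
  shows "group_hom (H \<times>\<times> K) H fst"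
proof -
  have "fst \<in> hom (H \<times>\<times> K) H" unfolding hom_def by (auto simp: Pi_def)
  then show ?thesis unfolding group_hom_def group_hom_axioms_def using DirProd_group assms by blast
qed

lemma group_hom_snd:
  assumes "group H" "group K"
  shows "group_hom (H \<times>\<times> K) K snd"
proof -
  have "snd \<in> hom (H \<times>\<times> K) K" unfolding hom_def by (auto simp: Pi_def)
  then show ?thesis unfolding group_hom_def group_hom_axioms_def using DirProd_group assms by blast
qed

text \<open>A power \<open>n\<close> with \<open>n \<equiv> 1\<close> modulo \<open>|H|\<close> and \<open>n \<equiv> 0\<close> modulo \<open>|K|\<close> projects \<open>(a, b)\<close> to \<open>(a, 1)\<close>.\<close>

lemma coprime_DirProd_subgroup_fst_mem:
  assumes H: "group H" and K: "group K" and fin: "finite (carrier H)" "finite (carrier K)"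
    and cop: "coprime (order H) (order K)"
    and Y: "subgroup Y (H \<times>\<times> K)" and ab: "(a, b) \<in> Y"
  shows "(a, \<one>\<^bsub>K\<^esub>) \<in> Y"
proof -
  interpret H: group H by fact
  interpret K: group K by fact
  interpret HK: group "H \<times>\<times> K" using DirProd_group H K by blast
  have a: "a \<in> carrier H" and b: "b \<in> carrier K" using ab subgroup.subset[OF Y] by auto
  have "order K \<noteq> 0" using fin(2) K.order_gt_0_iff_finite by auto
  then obtain x y where "order K * x = order H * y + gcd (order K) (order H)"
    using bezout_nat by blast
  then have "order K * x = 1 + order H * y" using cop by (simp add: coprime_iff_gcd_eq_1 gcd.commute)
  then have n: "(order K * x) mod order H = 1 mod order H" using mod_mult_self2[of 1 "order H" y] by simp
  have "(a, b) [^]\<^bsub>H \<times>\<times> K\<^esub> (order K * x) \<in> Y"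
    using HK.subgroup_int_pow_closed[OF Y ab, of "int (order K * x)"] by (simp only: int_pow_int)
  moreover have "b [^]\<^bsub>K\<^esub> (order K * x) = \<one>\<^bsub>K\<^esub>"
    using b by (simp add: K.nat_pow_pow[symmetric] K.pow_order_eq_1)
  ultimately show ?thesis
    using DirProd_pow[OF H K a b] H.pow_eq_self_if_mod_order[OF fin(1) a n] by simp
qed

lemma coprime_DirProd_subgroup_eq_Times:
  assumes H: "group H" and K: "group K" and fin: "finite (carrier H)" "finite (carrier K)"
    and cop: "coprime (order H) (order K)" and Y: "subgroup Y (H \<times>\<times> K)"
  shows "Y = fst ` Y \<times> snd ` Y"
proof -
  interpret H: group H by fact
  interpret K: group K by fact
  have "(\<lambda>(a, b). (b, a)) \<in> hom (H \<times>\<times> K) (K \<times>\<times> H)"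
    using DirProd_commute_iso_set unfolding iso_def by blast
  then have "group_hom (H \<times>\<times> K) (K \<times>\<times> H) (\<lambda>(a, b). (b, a))"
    by (intro group_hom.intro group_hom_axioms.intro DirProd_group H K)
  then have swap: "subgroup ((\<lambda>(a, b). (b, a)) ` Y) (K \<times>\<times> H)"
    using group_hom.subgroup_img_is_subgroup[OF _ Y] by blast
  have mix: "(a, b') \<in> Y" if ab: "(a, b) \<in> Y" and ab': "(a', b') \<in> Y" for a b a' b'
  proof -
    have "(b', a') \<in> (\<lambda>(a, b). (b, a)) ` Y" by (rule rev_image_eqI[OF ab']) simp
    then have "(b', \<one>\<^bsub>H\<^esub>) \<in> (\<lambda>(a, b). (b, a)) ` Y"
      using coprime_DirProd_subgroup_fst_mem[OF K H fin(2,1) _ swap] cop by (simp add: coprime_commute)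
    then obtain q where "q \<in> Y" "(b', \<one>\<^bsub>H\<^esub>) = (\<lambda>(a, b). (b, a)) q" by blast
    then have "(\<one>\<^bsub>H\<^esub>, b') \<in> Y" by (cases q) simp
    moreover have "(a, \<one>\<^bsub>K\<^esub>) \<in> Y" using coprime_DirProd_subgroup_fst_mem[OF H K fin cop Y ab] .
    ultimately have "(a, \<one>\<^bsub>K\<^esub>) \<otimes>\<^bsub>H \<times>\<times> K\<^esub> (\<one>\<^bsub>H\<^esub>, b') \<in> Y" using subgroup.m_closed[OF Y] by blast
    moreover have "a \<in> carrier H" "b' \<in> carrier K" using ab ab' subgroup.subset[OF Y] by auto
    ultimately show ?thesis by simp
  qed
  show ?thesis
  proof (intro equalityI subsetI)
    fix q assume "q \<in> Y"
    then show "q \<in> fst ` Y \<times> snd ` Y" by (metis image_eqI mem_Times_iff)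
  next
    fix q assume "q \<in> fst ` Y \<times> snd ` Y"
    then obtain u v where "u \<in> Y" "v \<in> Y" "q = (fst u, snd v)" by (auto simp: mem_Times_iff)
    then show "q \<in> Y" using mix[of "fst u" "snd u" "fst v" "snd v"] by simp
  qed
qed

context group
begin

lemma exists_elem_of_prime_order:
  assumes fin: "finite (carrier G)" and p: "Factorial_Ring.prime p" and pd: "p dvd order G"
  shows "\<exists>x\<in>carrier G. ord x = p"
proof -
  obtain P a m where P: "subgroup P G" "card P = p ^ a" "order G = p ^ a * m" "\<not> p dvd m"
    using exists_sylow_subgroup[OF fin p] by blast
  have Ps: "P \<subseteq> carrier G" using subgroup.subset[OF P(1)] .
  have "a \<noteq> 0"
  proof
    assume "a = 0"
    then show False using pd P(3,4) by simp
  qed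
  then have "card P \<noteq> 1" using P(2) prime_gt_1_nat[OF p] one_less_power[of p a] by simp
  then have "P \<noteq> {\<one>}" by auto
  then obtain x where x: "x \<in> P" "x \<noteq> \<one>" using subgroup.one_closed[OF P(1)] by blast
  have xc: "x \<in> carrier G" using x Ps by blast
  have "x [^] card P = \<one>" using pow_card_subgroup_eq_one[OF P(1) x(1) finite_subset[OF Ps fin]] .
  then have "ord x dvd p ^ a" using pow_eq_id[OF xc] P(2) by simp
  then obtain i where i: "ord x = p ^ i" using divides_primepow_nat[OF p] by blast
  have "i \<noteq> 0" using i x(2) ord_eq_1[OF xc] by auto
  then obtain j where j: "i = Suc j" using not0_implies_Suc by blast
  have "ord (x [^] (p ^ j)) = ord x div p ^ j" using ord_pow[OF xc] i j p by (simp add: prime_gt_0_nat)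
  also have "\<dots> = p" using i j p by (simp add: prime_gt_0_nat)
  finally show ?thesis using xc by blast
qed

end

section \<open>When the bound is attained\<close>

context finite_group_pair
begin

lemma not_subset_if_self_normalizing_H:
  assumes A: "subgroup A H" "A \<noteq> carrier H" "normalizer H A = A"
  shows "\<not> D_classes (H \<times>\<times> K) \<subseteq> product_classes"
proof (rule D_classes_not_subset_product_classes)
  have Ane: "A \<noteq> {}" using subgroup.one_closed[OF A(1)] by blast
  have A1: "A \<noteq> {\<one>\<^bsub>H\<^esub>}" using A(3) H.normalizer_triv nontrivial_H by auto
  show "subgroup (A \<times> {\<one>\<^bsub>K\<^esub>}) (H \<times>\<times> K)"
    using DirProd_subgroups[OF H.is_group A(1) K.is_group K.triv_subgroup] .
  show "A \<times> {\<one>\<^bsub>K\<^esub>} \<noteq> {\<one>\<^bsub>H \<times>\<times> K\<^esub>}"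
  proof
    assume "A \<times> {\<one>\<^bsub>K\<^esub>} = {\<one>\<^bsub>H \<times>\<times> K\<^esub>}"
    then have "A \<subseteq> {\<one>\<^bsub>H\<^esub>}" by auto
    then show False using A1 Ane by (simp add: subset_singleton_iff)
  qed
  have "normalizer (H \<times>\<times> K) (A \<times> {\<one>\<^bsub>K\<^esub>}) = A \<times> carrier K"
    using normalizer_DirProd[OF H.is_group K.is_group subgroup.subset[OF A(1)] _ Ane]
      K.normalizer_triv A(3) by simp
  then show "normalizer (H \<times>\<times> K) (A \<times> {\<one>\<^bsub>K\<^esub>}) \<noteq> A \<times> {\<one>\<^bsub>K\<^esub>}"
    using nontrivial_K Ane by (simp add: times_eq_iff)
  show "\<not> (\<exists>A' B. A \<times> {\<one>\<^bsub>K\<^esub>} = A' \<times> B \<and> H.conj_class A' \<in> admissible_classes H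
      \<and> K.conj_class B \<in> admissible_classes K)"
  proof
    assume "\<exists>A' B. A \<times> {\<one>\<^bsub>K\<^esub>} = A' \<times> B \<and> H.conj_class A' \<in> admissible_classes H
      \<and> K.conj_class B \<in> admissible_classes K"
    then obtain A' B where "A \<times> {\<one>\<^bsub>K\<^esub>} = A' \<times> B" and ext: "H.conj_class A' \<in> admissible_classes H"
      by blast
    then have "A' = A" using Ane by (simp add: times_eq_iff)
    then have ext: "H.conj_class A \<in> admissible_classes H" using ext by simp
    then have "A = {\<one>\<^bsub>H\<^esub>} \<or> A = carrier H \<or> normalizer H A \<noteq> A"
      using H.admissible_classes_memD(2)[OF ext H.self_in_conj_class[OF subgroup.subset[OF A(1)]]] by simp
    then show False using A A1 by blast
  qed
qed

lemma not_subset_if_self_normalizing_K: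
  assumes B: "subgroup B K" "B \<noteq> carrier K" "normalizer K B = B"
  shows "\<not> D_classes (H \<times>\<times> K) \<subseteq> product_classes"
proof (rule D_classes_not_subset_product_classes)
  have Bne: "B \<noteq> {}" using subgroup.one_closed[OF B(1)] by blast
  have B1: "B \<noteq> {\<one>\<^bsub>K\<^esub>}" using B(3) K.normalizer_triv nontrivial_K by auto
  show "subgroup ({\<one>\<^bsub>H\<^esub>} \<times> B) (H \<times>\<times> K)"
    using DirProd_subgroups[OF H.is_group H.triv_subgroup K.is_group B(1)] .
  show "{\<one>\<^bsub>H\<^esub>} \<times> B \<noteq> {\<one>\<^bsub>H \<times>\<times> K\<^esub>}"
  proof
    assume "{\<one>\<^bsub>H\<^esub>} \<times> B = {\<one>\<^bsub>H \<times>\<times> K\<^esub>}"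
    then have "B \<subseteq> {\<one>\<^bsub>K\<^esub>}" by auto
    then show False using B1 Bne by (simp add: subset_singleton_iff)
  qed
  have "normalizer (H \<times>\<times> K) ({\<one>\<^bsub>H\<^esub>} \<times> B) = carrier H \<times> B"
    using normalizer_DirProd[OF H.is_group K.is_group _ subgroup.subset[OF B(1)] _ Bne]
      H.normalizer_triv B(3) by simp
  then show "normalizer (H \<times>\<times> K) ({\<one>\<^bsub>H\<^esub>} \<times> B) \<noteq> {\<one>\<^bsub>H\<^esub>} \<times> B"
    using nontrivial_H Bne by (simp add: times_eq_iff)
  show "\<not> (\<exists>A B'. {\<one>\<^bsub>H\<^esub>} \<times> B = A \<times> B' \<and> H.conj_class A \<in> admissible_classes H
      \<and> K.conj_class B' \<in> admissible_classes K)"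
  proof
    assume "\<exists>A B'. {\<one>\<^bsub>H\<^esub>} \<times> B = A \<times> B' \<and> H.conj_class A \<in> admissible_classes H
      \<and> K.conj_class B' \<in> admissible_classes K"
    then obtain A B' where "{\<one>\<^bsub>H\<^esub>} \<times> B = A \<times> B'" and ext: "K.conj_class B' \<in> admissible_classes K"
      by blast
    then have "B' = B" using Bne by (simp add: times_eq_iff)
    then have ext: "K.conj_class B \<in> admissible_classes K" using ext by simp
    then have "B = {\<one>\<^bsub>K\<^esub>} \<or> B = carrier K \<or> normalizer K B \<noteq> B"
      using K.admissible_classes_memD(2)[OF ext K.self_in_conj_class[OF subgroup.subset[OF B(1)]]] by simp
    then show False using B B1 by blast
  qed
qed

lemma generate_pair_eq_powers:
  assumes h: "h \<in> carrier H" and k: "k \<in> carrier K"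
  shows "generate (H \<times>\<times> K) {(h, k)} = {(h [^]\<^bsub>H\<^esub> n, k [^]\<^bsub>K\<^esub> n) | n. n \<in> (UNIV :: nat set)}"
proof -
  have fin: "finite (carrier (H \<times>\<times> K))" using finite_H finite_K by simp
  have hk: "(h, k) \<in> carrier (H \<times>\<times> K)" using h k by simp
  show ?thesis
    unfolding HK.generate_pow_on_finite_carrier[OF fin hk] DirProd_pow[OF H.is_group K.is_group h k] ..
qed

lemma pair_one_mem_normalizer_generate:
  assumes h: "h \<in> carrier H" and k: "k \<in> carrier K"
  shows "(h, \<one>\<^bsub>K\<^esub>) \<in> normalizer (H \<times>\<times> K) (generate (H \<times>\<times> K) {(h, k)})"
proof -
  have conj_fix: "(h, \<one>\<^bsub>K\<^esub>) \<otimes>\<^bsub>H \<times>\<times> K\<^esub> y \<otimes>\<^bsub>H \<times>\<times> K\<^esub> inv\<^bsub>H \<times>\<times> K\<^esub> (h, \<one>\<^bsub>K\<^esub>) = y"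
    if y: "y \<in> generate (H \<times>\<times> K) {(h, k)}" for y
  proof -
    obtain n :: nat where n: "y = (h [^]\<^bsub>H\<^esub> n, k [^]\<^bsub>K\<^esub> n)" using y generate_pair_eq_powers[OF h k] by auto
    have "h \<otimes>\<^bsub>H\<^esub> h [^]\<^bsub>H\<^esub> n = h [^]\<^bsub>H\<^esub> n \<otimes>\<^bsub>H\<^esub> h"
      using H.nat_pow_comm[of h 1 n] h by simp
    then have "h \<otimes>\<^bsub>H\<^esub> h [^]\<^bsub>H\<^esub> n \<otimes>\<^bsub>H\<^esub> inv\<^bsub>H\<^esub> h = h [^]\<^bsub>H\<^esub> n" using h by simp
    then show ?thesis unfolding n using h k by simp
  qed
  have "generate (H \<times>\<times> K) {(h, k)} \<subseteq> carrier (H \<times>\<times> K)"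
    using HK.generate_incl h k by simp
  then show ?thesis using HK.mem_normalizer_iff conj_fix h by (simp add: image_def)
qed

text \<open>The cyclic subgroup generated by \<open>(h, k)\<close>, with \<open>h\<close>, \<open>k\<close> of order \<open>p\<close>, does not contain \<open>(h, 1)\<close>,
  whereas a product subgroup containing \<open>(h, k)\<close> and \<open>(1, 1)\<close> would.\<close>

lemma not_subset_if_common_prime_divisor:
  assumes p: "Factorial_Ring.prime p" "p dvd order H" "p dvd order K"
  shows "\<not> D_classes (H \<times>\<times> K) \<subseteq> product_classes"
proof -
  obtain h where h: "h \<in> carrier H" "H.ord h = p" using H.exists_elem_of_prime_order[OF finite_H p(1,2)] by blast
  obtain k where k: "k \<in> carrier K" "K.ord k = p" using K.exists_elem_of_prime_order[OF finite_K p(1,3)] by blast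
  have h1: "h \<noteq> \<one>\<^bsub>H\<^esub>" using H.ord_eq_1[OF h(1)] h(2) p(1) by auto
  define Y where "Y = generate (H \<times>\<times> K) {(h, k)}"
  have Ysub: "subgroup Y (H \<times>\<times> K)" unfolding Y_def using HK.generate_is_subgroup h(1) k(1) by simp
  have hkY: "(h, k) \<in> Y" unfolding Y_def by (rule generate.incl) simp
  have h1Y: "(h, \<one>\<^bsub>K\<^esub>) \<notin> Y"
  proof
    assume "(h, \<one>\<^bsub>K\<^esub>) \<in> Y"
    then obtain n :: nat where n: "h = h [^]\<^bsub>H\<^esub> n" "k [^]\<^bsub>K\<^esub> n = \<one>\<^bsub>K\<^esub>"
      using generate_pair_eq_powers[OF h(1) k(1)] unfolding Y_def by auto
    then have "p dvd n" using K.pow_eq_id[OF k(1)] k(2) by simp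
    then have "h [^]\<^bsub>H\<^esub> n = \<one>\<^bsub>H\<^esub>" using H.pow_eq_id[OF h(1)] h(2) by simp
    then show False using n h1 by simp
  qed
  show ?thesis
  proof (rule D_classes_not_subset_product_classes[OF Ysub])
    show "Y \<noteq> {\<one>\<^bsub>H \<times>\<times> K\<^esub>}" using hkY h1 by auto
    show "normalizer (H \<times>\<times> K) Y \<noteq> Y"
      using pair_one_mem_normalizer_generate[OF h(1) k(1)] h1Y unfolding Y_def by blast
    show "\<not> (\<exists>A B. Y = A \<times> B \<and> H.conj_class A \<in> admissible_classes H \<and> K.conj_class B \<in> admissible_classes K)"
    proof clarify
      fix A B assume "Y = A \<times> B"
      moreover have "(\<one>\<^bsub>H\<^esub>, \<one>\<^bsub>K\<^esub>) \<in> Y" using subgroup.one_closed[OF Ysub] by simp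
      ultimately have "(h, \<one>\<^bsub>K\<^esub>) \<in> Y" using hkY by blast
      then show False using h1Y by blast
    qed
  qed
qed

lemma D_classes_subset_product_classes_if:
  assumes nil: "nilpotent_group H" "nilpotent_group K" and cop: "coprime (order H) (order K)"
  shows "D_classes (H \<times>\<times> K) \<subseteq> product_classes"
proof
  fix c assume "c \<in> D_classes (H \<times>\<times> K)"
  then obtain Y where Y: "subgroup Y (H \<times>\<times> K)" "Y \<noteq> {\<one>\<^bsub>H \<times>\<times> K\<^esub>}"
    "normalizer (H \<times>\<times> K) Y \<noteq> Y" "c = HK.conj_class Y" unfolding D_classes_def by blast
  define A where "A = fst ` Y"
  define B where "B = snd ` Y"
  have YAB: "Y = A \<times> B"
    unfolding A_def B_def using coprime_DirProd_subgroup_eq_Times[OF H.is_group K.is_group finite_H finite_K cop Y(1)] .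
  have A: "subgroup A H" and B: "subgroup B K"
    unfolding A_def B_def using group_hom.subgroup_img_is_subgroup[OF _ Y(1)]
      group_hom_fst group_hom_snd H.is_group K.is_group by blast+
  have ext: "H.conj_class A \<in> admissible_classes H" "K.conj_class B \<in> admissible_classes K"
    unfolding H.mem_admissible_classes_iff K.mem_admissible_classes_iff
    using A B H.nilpotent_imp_normalizer_ne[OF nil(1) A] K.nilpotent_imp_normalizer_ne[OF nil(2) B] by blast+
  have "(H.conj_class A, K.conj_class B) \<noteq> ({{\<one>\<^bsub>H\<^esub>}}, {{\<one>\<^bsub>K\<^esub>}})"
  proof
    assume "(H.conj_class A, K.conj_class B) = ({{\<one>\<^bsub>H\<^esub>}}, {{\<one>\<^bsub>K\<^esub>}})"
    then have "A = {\<one>\<^bsub>H\<^esub>}" "B = {\<one>\<^bsub>K\<^esub>}"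
      using H.conj_class_eq_triv_iff[OF A] K.conj_class_eq_triv_iff[OF B] by simp_all
    then show False using Y(2) YAB by simp
  qed
  moreover have "(H.conj_class A, K.conj_class B) \<noteq> ({carrier H}, {carrier K})"
  proof
    assume "(H.conj_class A, K.conj_class B) = ({carrier H}, {carrier K})"
    then have "A = carrier H" "B = carrier K"
      using H.conj_class_eq_carrier_iff[OF A] K.conj_class_eq_carrier_iff[OF B] by simp_all
    then show False using Y(3) YAB HK.normalizer_carrier by simp
  qed
  moreover have "c = conj_class_prod (H.conj_class A) (K.conj_class B)"
    using Y(4) YAB conj_class_DirProd[OF H.is_group K.is_group subgroup.subset[OF A] subgroup.subset[OF B]]
    by simp
  ultimately show "c \<in> product_classes"
    unfolding product_classes_def using ext by (intro rev_image_eqI[of "(H.conj_class A, K.conj_class B)"]) auto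
qed

lemma D_classes_subset_product_classes_iff:
  "D_classes (H \<times>\<times> K) \<subseteq> product_classes \<longleftrightarrow>
     nilpotent_group H \<and> nilpotent_group K \<and> coprime (order H) (order K)"
proof
  assume sub: "D_classes (H \<times>\<times> K) \<subseteq> product_classes"
  have "nilpotent_group H"
    using H.normalizer_condition_imp_nilpotent[OF finite_H] not_subset_if_self_normalizing_H sub by blast
  moreover have "nilpotent_group K"
    using K.normalizer_condition_imp_nilpotent[OF finite_K] not_subset_if_self_normalizing_K sub by blast
  moreover have "coprime (order H) (order K)"
  proof (rule ccontr)
    assume "\<not> coprime (order H) (order K)"
    then have "gcd (order H) (order K) \<noteq> 1" by (simp add: coprime_iff_gcd_eq_1)
    then obtain p where "Factorial_Ring.prime p" "p dvd gcd (order H) (order K)"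
      using prime_factor_nat by blast
    then have "Factorial_Ring.prime p" "p dvd order H" "p dvd order K" by simp_all
    then show False using not_subset_if_common_prime_divisor sub by blast
  qed
  ultimately show "nilpotent_group H \<and> nilpotent_group K \<and> coprime (order H) (order K)" by blast
next
  assume "nilpotent_group H \<and> nilpotent_group K \<and> coprime (order H) (order K)"
  then show "D_classes (H \<times>\<times> K) \<subseteq> product_classes" using D_classes_subset_product_classes_if by blast
qed

end

theorem mainTheorem6:
  fixes H :: "('a, 'b) monoid_scheme" and K :: "('c, 'd) monoid_scheme"
  assumes "group H" and "group K"
    and "finite (carrier H)" and "finite (carrier K)"
    and "carrier H \<noteq> {\<one>\<^bsub>H\<^esub>}" and "carrier K \<noteq> {\<one>\<^bsub>K\<^esub>}"
  shows "D_count (H \<times>\<times> K) \<ge> (D_count H + 2) * (D_count K + 2) - 2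
    \<and> (D_count (H \<times>\<times> K) = (D_count H + 2) * (D_count K + 2) - 2
         \<longleftrightarrow> nilpotent_group H \<and> nilpotent_group K \<and> coprime (order H) (order K))"
proof -
  interpret finite_group_pair H K
    using assms by (simp add: finite_group_pair_def finite_group_pair_axioms_def)
  have fin: "finite (D_classes (H \<times>\<times> K))"
    using HK.finite_D_classes finite_H finite_K by simp
  have "card product_classes \<le> card (D_classes (H \<times>\<times> K))"
    using card_mono[OF fin product_classes_subset_D_classes] .
  moreover have "card (D_classes (H \<times>\<times> K)) = card product_classes
      \<longleftrightarrow> D_classes (H \<times>\<times> K) \<subseteq> product_classes"
  proof
    assume "card (D_classes (H \<times>\<times> K)) = card product_classes"
    then show "D_classes (H \<times>\<times> K) \<subseteq> product_classes"
      using card_subset_eq[OF fin product_classes_subset_D_classes] by simp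
  next
    assume "D_classes (H \<times>\<times> K) \<subseteq> product_classes"
    then show "card (D_classes (H \<times>\<times> K)) = card product_classes"
      using product_classes_subset_D_classes by simp
  qed
  ultimately show ?thesis
    unfolding D_count_eq_card_D_classes[of "H \<times>\<times> K"] card_product_classes[symmetric]
      D_classes_subset_product_classes_iff[symmetric]
    by blast
qed

end
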